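(* Let $G$ be a connected graph that is not complete and let $K\subseteq V(G)$ be a nonempty set of universal vertices of $G$. Let $G_K$ be the graph obtained from $G$ by adding a new vertex $x$ with $N_{G_K}(x)=K$. Then $\chi(\mathcal{R}(G_K))=\chi(\mathcal{R}(G))$.
   Context: For a connected graph $G$, a search tree on $G$ is a rooted tree with vertex set $V(G)$ defined recursively: its root is some vertex $r\in V(G)$, and the children of $r$ are the roots of search trees on the connected components of $G-r$. For a rooted tree $T$ and $w\in V(T)$, $T|w$ denotes the subtree rooted at $w$. Let $T$ be a search tree on $G$, let $v$ be a child of $u$ in $T$, and let $p$ be the parent of $u$ (if it exists). The $uv$-rotation transforms $T$ into the search tree $T'$ in which: $u$ is a child of $v$ and $v$ is a child of $p$ (or $v$ is the root if $u$ was the root); every subtree of $u$ in $T$ other than $T|v$ is a subtree of $u$ in $T'$; and every subtree $S$ of $v$ in $T$ is a subtree of $u$ in $T'$ if $u$ is adjacent in $G$ to some vertex of $S$, and a subtree of $v$ in $T'$ otherwise. The rotation graph $\mathcal{R}(G)$ is the graph whose vertices are the search trees on $G$, two being adjacent iff they differ by one rotation. $\chi$ denotes chromatic number. A vertex is universal if it is adjacent to all other vertices. *)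

theory Defs
  imports Main
begin

definition simple_graph :: "'a set \<Rightarrow> ('a \<Rightarrow> 'a \<Rightarrow> bool) \<Rightarrow> bool" where
  "simple_graph V E \<longleftrightarrow> finite V \<and> (\<forall>a b. E a b \<longrightarrow> a \<in> V \<and> b \<in> V \<and> a \<noteq> b \<and> E b a)"

definition induced_edges :: "('a \<Rightarrow> 'a \<Rightarrow> bool) \<Rightarrow> 'a set \<Rightarrow> ('a \<times> 'a) set" where
  "induced_edges E S = {(a, b). a \<in> S \<and> b \<in> S \<and> E a b}"

definition connected_on :: "('a \<Rightarrow> 'a \<Rightarrow> bool) \<Rightarrow> 'a set \<Rightarrow> bool" where
  "connected_on E S \<longleftrightarrow> S \<noteq> {} \<and> (\<forall>a\<in>S. \<forall>b\<in>S. (a, b) \<in> (induced_edges E S)\<^sup>*)"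

definition components :: "('a \<Rightarrow> 'a \<Rightarrow> bool) \<Rightarrow> 'a set \<Rightarrow> 'a set set" where
  "components E S = {{b \<in> S. (a, b) \<in> (induced_edges E S)\<^sup>*} | a. a \<in> S}"

definition universal :: "'a set \<Rightarrow> ('a \<Rightarrow> 'a \<Rightarrow> bool) \<Rightarrow> 'a \<Rightarrow> bool" where
  "universal V E v \<longleftrightarrow> v \<in> V \<and> (\<forall>w\<in>V. w \<noteq> v \<longrightarrow> E v w)"

definition complete_graph :: "'a set \<Rightarrow> ('a \<Rightarrow> 'a \<Rightarrow> bool) \<Rightarrow> bool" where
  "complete_graph V E \<longleftrightarrow> (\<forall>a\<in>V. \<forall>b\<in>V. a \<noteq> b \<longrightarrow> E a b)"

text \<open>A rooted tree on a vertex set S is represented by its parent function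
  t :: 'a => 'a option: t x = Some p means p is the parent of x; t x = None
  for the root and for all vertices outside S.\<close>

inductive search_tree :: "('a \<Rightarrow> 'a \<Rightarrow> bool) \<Rightarrow> 'a set \<Rightarrow> ('a \<Rightarrow> 'a option) \<Rightarrow> bool"
  for E where
  "\<lbrakk> connected_on E S; r \<in> S; t r = None; \<forall>x. x \<notin> S \<longrightarrow> t x = None;
     \<forall>C \<in> components E (S - {r}). \<exists>c\<in>C. t c = Some r \<and>
        search_tree E C (\<lambda>x. if x \<in> C \<and> x \<noteq> c then t x else None) \<rbrakk>
   \<Longrightarrow> search_tree E S t"

definition subtree :: "('a \<Rightarrow> 'a option) \<Rightarrow> 'a \<Rightarrow> 'a set" where
  "subtree t w = {y. (y, w) \<in> {(a, b). t a = Some b}\<^sup>*}"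

text \<open>The uv-rotation, where v is a child of u (t v = Some u): u becomes a
  child of v, v takes the former parent of u (or becomes the root), the children
  w of v whose subtree contains a neighbour of u become children of u, and
  everything else is unchanged.\<close>
definition rotate :: "('a \<Rightarrow> 'a \<Rightarrow> bool) \<Rightarrow> ('a \<Rightarrow> 'a option) \<Rightarrow> 'a \<Rightarrow> 'a \<Rightarrow> ('a \<Rightarrow> 'a option)" where
  "rotate E t u v = (\<lambda>x.
     if x = u then Some v
     else if x = v then t u
     else if t x = Some v \<and> (\<exists>y \<in> subtree t x. E u y) then Some u
     else t x)"

definition rot_adj :: "('a \<Rightarrow> 'a \<Rightarrow> bool) \<Rightarrow> ('a \<Rightarrow> 'a option) \<Rightarrow> ('a \<Rightarrow> 'a option) \<Rightarrow> bool" where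
  "rot_adj E t t' \<longleftrightarrow>
     (\<exists>u v. t v = Some u \<and> t' = rotate E t u v) \<or> (\<exists>u v. t' v = Some u \<and> t = rotate E t' u v)"

definition chromatic_number :: "'b set \<Rightarrow> ('b \<Rightarrow> 'b \<Rightarrow> bool) \<Rightarrow> nat" where
  "chromatic_number W A = (LEAST k. \<exists>f. (\<forall>x\<in>W. f x < k) \<and>
      (\<forall>x\<in>W. \<forall>y\<in>W. A x y \<longrightarrow> f x \<noteq> (f y :: nat)))"

definition chi_rotation_graph :: "'a set \<Rightarrow> ('a \<Rightarrow> 'a \<Rightarrow> bool) \<Rightarrow> nat" where
  "chi_rotation_graph V E = chromatic_number {t. search_tree E V t} (rot_adj E)"

definition add_vertex_edges :: "('a \<Rightarrow> 'a \<Rightarrow> bool) \<Rightarrow> 'a \<Rightarrow> 'a set \<Rightarrow> 'a \<Rightarrow> 'a \<Rightarrow> bool" where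
  "add_vertex_edges E x K = (\<lambda>a b. E a b \<or> (a = x \<and> b \<in> K) \<or> (b = x \<and> a \<in> K))"

end

(*
  Adding x as a new root to the search trees of G embeds R(G) into R(G_K) and maps rotations
  to rotations, so chi(R(G)) <= chi(R(G_K)).

  Conversely, x is joined only to universal vertices, so every child subtree of x contains a
  vertex of K, and hence x has at most one child in a search tree T of G_K.  Deleting x
  (its child takes its place) gives a search tree T - x of G, since removing x never
  disconnects a connected set.  A rotation of T at the edge between x and its parent or child
  leaves T - x unchanged but changes the label of x, namely 0 if x is a leaf and 1 or 2 by the
  parity of its depth otherwise; any other rotation of T induces a rotation of T - x and keeps
  the label of x.  So if f is a proper colouring of R(G) with m >= 3 colours, then
  T |-> (f (T - x) + label T) mod m is a proper colouring of R(G_K).  Finally m >= 3 because a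
  non-edge ab of G together with a universal vertex k gives a closed walk of five rotations in
  R(G), starting from the trees on the path a - k - b and adding the other vertices as roots.
*)
theory Submission
  imports Defs
begin

section \<open>Connected components\<close>

lemma in_induced_edges_iff [simp]: "(a, b) \<in> induced_edges E A \<longleftrightarrow> a \<in> A \<and> b \<in> A \<and> E a b"
  by (simp add: induced_edges_def)

lemma induced_edges_mono: "A \<subseteq> B \<Longrightarrow> induced_edges E A \<subseteq> induced_edges E B"
  by auto

lemma induced_edges_cong:
  "(\<forall>a\<in>A. \<forall>b\<in>A. E a b = E' a b) \<Longrightarrow> induced_edges E A = induced_edges E' A"
  by (auto simp: induced_edges_def)

lemma reachable_sym:
  assumes "symp E" and "(a, b) \<in> (induced_edges E A)\<^sup>*"
  shows "(b, a) \<in> (induced_edges E A)\<^sup>*"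
proof -
  have "sym (induced_edges E A)"
    using assms(1) by (auto simp: symp_def sym_def)
  then show ?thesis
    using assms(2) sym_rtrancl by (auto dest: symD)
qed

lemma reachable_stays_in_closed_set:
  assumes "(a, b) \<in> (induced_edges E A)\<^sup>*" and "a \<in> C" and "C \<subseteq> A"
    and closed: "\<forall>p\<in>C. \<forall>q\<in>A. E p q \<longrightarrow> q \<in> C"
  shows "(a, b) \<in> (induced_edges E C)\<^sup>* \<and> b \<in> C"
  using assms(1)
proof (induction rule: rtrancl_induct)
  case (step y z)
  then have "z \<in> C"
    using closed by auto
  then show ?case
    using step by (auto intro: rtrancl_into_rtrancl)
qed (use assms in auto)

lemma reachable_leaves_set:
  assumes "(a, b) \<in> (induced_edges E A)\<^sup>*" and "a \<in> B" and "b \<notin> B"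
  shows "\<exists>p q. p \<in> B \<and> q \<notin> B \<and> p \<in> A \<and> q \<in> A \<and> E p q"
  using assms
proof (induction rule: rtrancl_induct)
  case (step y z)
  then show ?case
    by (cases "y \<in> B") auto
qed auto

lemma components_iff:
  "C \<in> components E A \<longleftrightarrow> (\<exists>a\<in>A. C = {b\<in>A. (a, b) \<in> (induced_edges E A)\<^sup>*})"
  by (auto simp: components_def)

lemma components_subset: "C \<in> components E A \<Longrightarrow> C \<subseteq> A"
  by (auto simp: components_iff)

lemma components_nonempty: "C \<in> components E A \<Longrightarrow> C \<noteq> {}"
  by (auto simp: components_iff)

lemma ex_component: "a \<in> A \<Longrightarrow> \<exists>C\<in>components E A. a \<in> C"
  by (auto simp: components_def)

lemma component_eq_reachable:
  assumes "symp E" and C: "C \<in> components E A" and "a \<in> C"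
  shows "C = {b\<in>A. (a, b) \<in> (induced_edges E A)\<^sup>*}"
proof -
  obtain a0 where a0: "a0 \<in> A" "C = {b\<in>A. (a0, b) \<in> (induced_edges E A)\<^sup>*}"
    using C by (auto simp: components_iff)
  then have "(a0, a) \<in> (induced_edges E A)\<^sup>*" "(a, a0) \<in> (induced_edges E A)\<^sup>*"
    using \<open>a \<in> C\<close> reachable_sym[OF \<open>symp E\<close>] by auto
  with a0 show ?thesis
    by (auto intro: rtrancl_trans)
qed

lemma components_disjoint:
  assumes "symp E" and "C \<in> components E A" "D \<in> components E A" and "a \<in> C" "a \<in> D"
  shows "C = D"
  using component_eq_reachable[OF assms(1,2,4)] component_eq_reachable[OF assms(1,3,5)] by simp

lemma component_closed:
  assumes "symp E" and C: "C \<in> components E A" and "a \<in> C" "b \<in> A" "E a b"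
  shows "b \<in> C"
proof -
  have "a \<in> A"
    using C \<open>a \<in> C\<close> components_subset by blast
  then have "(a, b) \<in> (induced_edges E A)\<^sup>*"
    using \<open>b \<in> A\<close> \<open>E a b\<close> by (intro r_into_rtrancl) simp
  then show ?thesis
    using component_eq_reachable[OF \<open>symp E\<close> C \<open>a \<in> C\<close>] \<open>b \<in> A\<close> by blast
qed

lemma connected_on_component:
  assumes "symp E" and C: "C \<in> components E A"
  shows "connected_on E C"
proof -
  have "(a, b) \<in> (induced_edges E C)\<^sup>*" if "a \<in> C" "b \<in> C" for a b
  proof -
    have "(a, b) \<in> (induced_edges E A)\<^sup>*"
      using component_eq_reachable[OF assms that(1)] that(2) by auto
    moreover have "\<forall>p\<in>C. \<forall>q\<in>A. E p q \<longrightarrow> q \<in> C"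
      using component_closed[OF assms] by blast
    ultimately show ?thesis
      using reachable_stays_in_closed_set[OF _ that(1) components_subset[OF C]] by blast
  qed
  then show ?thesis
    using components_nonempty[OF C] by (simp add: connected_on_def)
qed

lemma componentI:
  assumes "symp E" and "C \<subseteq> A" and conn: "connected_on E C"
    and closed: "\<forall>p\<in>C. \<forall>q\<in>A. E p q \<longrightarrow> q \<in> C"
  shows "C \<in> components E A"
proof -
  obtain c where "c \<in> C"
    using conn by (auto simp: connected_on_def)
  have "C = {b\<in>A. (c, b) \<in> (induced_edges E A)\<^sup>*}"
  proof (intro set_eqI iffI)
    fix b assume "b \<in> C"
    then have "(c, b) \<in> (induced_edges E C)\<^sup>*"
      using conn \<open>c \<in> C\<close> by (auto simp: connected_on_def)
    then show "b \<in> {b\<in>A. (c, b) \<in> (induced_edges E A)\<^sup>*}"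
      using \<open>b \<in> C\<close> \<open>C \<subseteq> A\<close> rtrancl_mono[OF induced_edges_mono[OF \<open>C \<subseteq> A\<close>]] by auto
  qed (use reachable_stays_in_closed_set[OF _ \<open>c \<in> C\<close> \<open>C \<subseteq> A\<close> closed] in auto)
  then show ?thesis
    using \<open>c \<in> C\<close> \<open>C \<subseteq> A\<close> by (auto simp: components_iff)
qed

lemma components_of_connected:
  assumes "symp E" and "connected_on E A"
  shows "components E A = {A}"
proof -
  have A: "A \<in> components E A"
    using componentI[OF assms(1) _ assms(2)] by blast
  moreover have "D = A" if D: "D \<in> components E A" for D
  proof -
    obtain d where "d \<in> D"
      using components_nonempty[OF D] by blast
    then show ?thesis
      using components_disjoint[OF assms(1) D A] components_subset[OF D] by blast
  qed
  ultimately show ?thesis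
    by blast
qed

lemma connected_on_cong: "\<forall>a\<in>A. \<forall>b\<in>A. E a b = E' a b \<Longrightarrow> connected_on E A = connected_on E' A"
  unfolding connected_on_def by (drule induced_edges_cong) simp

lemma components_cong: "\<forall>a\<in>A. \<forall>b\<in>A. E a b = E' a b \<Longrightarrow> components E A = components E' A"
  unfolding components_def by (drule induced_edges_cong) simp

lemma connected_on_if_dominating:
  assumes "symp E" and "k \<in> A" and dom: "\<forall>w\<in>A. w \<noteq> k \<longrightarrow> E k w"
  shows "connected_on E A"
proof -
  have from_k: "(k, a) \<in> (induced_edges E A)\<^sup>*" if "a \<in> A" for a
    using that \<open>k \<in> A\<close> dom by (cases "a = k") auto
  have "(a, b) \<in> (induced_edges E A)\<^sup>*" if "a \<in> A" "b \<in> A" for a b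
    using reachable_sym[OF \<open>symp E\<close> from_k[OF that(1)]] from_k[OF that(2)] by (rule rtrancl_trans)
  then show ?thesis
    using \<open>k \<in> A\<close> by (auto simp: connected_on_def)
qed

lemma connected_on_ex_neighbour:
  assumes "connected_on E A" and "a \<in> A" and "A \<noteq> {a}"
  shows "\<exists>b\<in>A. b \<noteq> a \<and> E a b"
proof -
  obtain b where "b \<in> A" "b \<noteq> a"
    using assms by auto
  then have "(a, b) \<in> (induced_edges E A)\<^sup>*"
    using assms by (auto simp: connected_on_def)
  from reachable_leaves_set[OF this, of "{a}"] \<open>b \<noteq> a\<close> show ?thesis
    by auto
qed

lemma components_separated:
  assumes "symp E" and C: "C \<in> components E A" and D: "D \<in> components E A" and "C \<noteq> D"
    and "a \<in> C" "b \<in> D"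
  shows "a \<noteq> b \<and> \<not> E a b"
  using components_disjoint[OF assms(1) C D] component_closed[OF assms(1) C \<open>a \<in> C\<close>]
    components_subset[OF D] assms(4-6) by blast

lemma component_Diff_other:
  assumes "symp E" and C: "C \<in> components E A" and C0: "C0 \<in> components E A"
    and "C \<noteq> C0" and "x \<in> C0"
  shows "C \<in> components E (A - {x})"
proof (rule componentI[OF \<open>symp E\<close>])
  have "x \<notin> C"
    using components_disjoint[OF \<open>symp E\<close> C C0 _ \<open>x \<in> C0\<close>] \<open>C \<noteq> C0\<close> by auto
  then show "C \<subseteq> A - {x}"
    using components_subset[OF C] by auto
  show "connected_on E C" "\<forall>p\<in>C. \<forall>q\<in>A - {x}. E p q \<longrightarrow> q \<in> C"
    using connected_on_component[OF \<open>symp E\<close> C] component_closed[OF \<open>symp E\<close> C] by auto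
qed

lemma component_Diff_vertex:
  assumes "symp E" and C0: "C0 \<in> components E A" and "connected_on E (C0 - {x})"
  shows "C0 - {x} \<in> components E (A - {x})"
proof (rule componentI[OF \<open>symp E\<close>])
  show "C0 - {x} \<subseteq> A - {x}" "connected_on E (C0 - {x})"
    using components_subset[OF C0] assms(3) by auto
  show "\<forall>p\<in>C0 - {x}. \<forall>q\<in>A - {x}. E p q \<longrightarrow> q \<in> C0 - {x}"
    using component_closed[OF \<open>symp E\<close> C0] by blast
qed

lemma components_remove_vertex:
  assumes "symp E" and C0: "C0 \<in> components E A" and "x \<in> C0"
    and conn: "C0 = {x} \<or> connected_on E (C0 - {x})"
  shows "components E (A - {x}) = (components E A - {C0}) \<union> (if C0 = {x} then {} else {C0 - {x}})"
proof -
  note other = component_Diff_other[OF assms(1) _ C0 _ \<open>x \<in> C0\<close>]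
  have main: "C0 - {x} \<in> components E (A - {x})" if "C0 \<noteq> {x}"
    using component_Diff_vertex[OF assms(1) C0] conn that by blast
  have "D \<in> (components E A - {C0}) \<union> (if C0 = {x} then {} else {C0 - {x}})"
    if D: "D \<in> components E (A - {x})" for D
  proof -
    obtain d where d: "d \<in> D"
      using components_nonempty[OF D] by blast
    then have "d \<in> A" "d \<noteq> x"
      using components_subset[OF D] by auto
    then obtain C where C: "C \<in> components E A" "d \<in> C"
      using ex_component[of d A E] by blast
    show ?thesis
    proof (cases "C = C0")
      case True
      then have "C0 \<noteq> {x}"
        using C(2) \<open>d \<noteq> x\<close> by auto
      then have "D = C0 - {x}"
        using components_disjoint[OF \<open>symp E\<close> D main d] C(2) True \<open>d \<noteq> x\<close> by auto
      then show ?thesis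
        using \<open>C0 \<noteq> {x}\<close> by simp
    next
      case False
      then show ?thesis
        using components_disjoint[OF \<open>symp E\<close> D other[OF C(1) False] d C(2)] C(1) by simp
    qed
  qed
  moreover have "(components E A - {C0}) \<union> (if C0 = {x} then {} else {C0 - {x}}) \<subseteq> components E (A - {x})"
    using other main by (simp split: if_splits) blast
  ultimately show ?thesis
    by blast
qed

section \<open>Search trees as parent functions\<close>

definition parent_rel :: "('a \<Rightarrow> 'a option) \<Rightarrow> ('a \<times> 'a) set" where
  "parent_rel t = {(a, b). t a = Some b}"

lemma in_parent_rel_iff [simp]: "(a, b) \<in> parent_rel t \<longleftrightarrow> t a = Some b"
  by (simp add: parent_rel_def)

lemma subtree_iff: "y \<in> subtree t w \<longleftrightarrow> (y, w) \<in> (parent_rel t)\<^sup>*"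
  by (simp add: subtree_def parent_rel_def)

lemma subtree_self [simp]: "w \<in> subtree t w"
  by (simp add: subtree_iff)

lemma subtree_trans: "y \<in> subtree t z \<Longrightarrow> z \<in> subtree t w \<Longrightarrow> y \<in> subtree t w"
  unfolding subtree_iff by (rule rtrancl_trans)

lemma subtree_child: "t y = Some w \<Longrightarrow> y \<in> subtree t w"
  by (simp add: subtree_iff r_into_rtrancl)

lemma subtree_below_child:
  assumes "y \<in> subtree t w" and "y \<noteq> w"
  obtains c where "t c = Some w" and "y \<in> subtree t c"
proof -
  have "(y, w) \<in> (parent_rel t)\<^sup>+"
    using assms by (simp add: subtree_iff rtrancl_eq_or_trancl)
  then obtain c where "(y, c) \<in> (parent_rel t)\<^sup>*" "(c, w) \<in> parent_rel t"
    by (blast dest: tranclD2)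
  then show thesis
    using that by (simp add: subtree_iff)
qed

lemma subtree_parent:
  assumes "y \<in> subtree t w" and "y \<noteq> w"
  obtains p where "t y = Some p" and "p \<in> subtree t w"
proof -
  have "(y, w) \<in> (parent_rel t)\<^sup>+"
    using assms by (simp add: subtree_iff rtrancl_eq_or_trancl)
  then obtain p where "(y, p) \<in> parent_rel t" "(p, w) \<in> (parent_rel t)\<^sup>*"
    by (blast dest: tranclD)
  then show thesis
    using that by (simp add: subtree_iff)
qed

lemma subtree_leaf:
  assumes "\<forall>y. t y \<noteq> Some w"
  shows "subtree t w = {w}"
proof -
  have "y = w" if "y \<in> subtree t w" for y
    using that assms by (cases "y = w") (auto elim: subtree_below_child)
  then show ?thesis
    by auto
qed

definition branch :: "('a \<Rightarrow> 'a option) \<Rightarrow> 'a set \<Rightarrow> 'a \<Rightarrow> 'a \<Rightarrow> 'a option" where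
  "branch t C c = (\<lambda>x. if x \<in> C \<and> x \<noteq> c then t x else None)"

lemma parent_rel_branch_subset: "parent_rel (branch t C c) \<subseteq> parent_rel t"
  by (auto simp: branch_def split: if_splits)

definition search_tree_at :: "('a \<Rightarrow> 'a \<Rightarrow> bool) \<Rightarrow> 'a set \<Rightarrow> ('a \<Rightarrow> 'a option) \<Rightarrow> 'a \<Rightarrow> bool" where
  "search_tree_at E S t r \<longleftrightarrow> connected_on E S \<and> r \<in> S \<and> t r = None \<and> (\<forall>x. x \<notin> S \<longrightarrow> t x = None) \<and>
     (\<forall>C\<in>components E (S - {r}). \<exists>c\<in>C. t c = Some r \<and> search_tree E C (branch t C c))"

lemma search_tree_iff_at: "search_tree E S t \<longleftrightarrow> (\<exists>r. search_tree_at E S t r)"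
  unfolding search_tree_at_def branch_def by (subst search_tree.simps) blast

lemma search_tree_at_imp_search_tree: "search_tree_at E S t r \<Longrightarrow> search_tree E S t"
  unfolding search_tree_iff_at by blast

lemma search_tree_atD:
  assumes "search_tree_at E S t r"
  shows "connected_on E S" "r \<in> S" "t r = None" "x \<notin> S \<Longrightarrow> t x = None"
    and "C \<in> components E (S - {r}) \<Longrightarrow> \<exists>c\<in>C. t c = Some r \<and> search_tree E C (branch t C c)"
  using assms by (auto simp: search_tree_at_def)

lemma search_tree_at_componentE:
  assumes "search_tree_at E S t r" and "C \<in> components E (S - {r})"
  obtains c where "c \<in> C" "t c = Some r" "search_tree E C (branch t C c)"
  using search_tree_atD(5)[OF assms] by blast

lemma search_tree_outside:
  assumes "search_tree E S t" and "x \<notin> S"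
  shows "t x = None"
proof -
  obtain r where "search_tree_at E S t r"
    using assms(1) unfolding search_tree_iff_at by blast
  then show ?thesis
    using assms(2) by (rule search_tree_atD(4))
qed

lemma search_tree_child_in: "search_tree E S t \<Longrightarrow> t x = Some y \<Longrightarrow> x \<in> S"
  using search_tree_outside by force

lemma search_tree_at_child_nonroot:
  assumes "search_tree_at E S t r" and "t y = Some z"
  shows "y \<in> S - {r}"
  using search_tree_child_in[OF search_tree_at_imp_search_tree[OF assms(1)] assms(2)]
    search_tree_atD(3)[OF assms(1)] assms(2) by auto

lemma search_tree_at_nonrootE:
  assumes "search_tree_at E S t r" and "y \<in> S - {r}"
  obtains C c where "C \<in> components E (S - {r})" "y \<in> C"
    and "c \<in> C" "t c = Some r" "search_tree E C (branch t C c)"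
proof -
  obtain C where C: "C \<in> components E (S - {r})" "y \<in> C"
    using ex_component[OF assms(2)] by blast
  obtain c where "c \<in> C" "t c = Some r" "search_tree E C (branch t C c)"
    using search_tree_at_componentE[OF assms(1) C(1)] .
  with C show thesis
    by (rule that)
qed

lemma search_tree_parent_in: "search_tree E S t \<Longrightarrow> t y = Some z \<Longrightarrow> z \<in> S"
proof (induction arbitrary: y rule: search_tree.induct)
  case (1 S r t)
  have "y \<in> S" "y \<noteq> r"
    using "1.hyps"(3,4) "1.prems" by auto
  then obtain C where C: "C \<in> components E (S - {r})" "y \<in> C"
    using ex_component[of y "S - {r}"] by auto
  then obtain c where c: "c \<in> C" "t c = Some r"
    and IH: "\<And>y. (if y \<in> C \<and> y \<noteq> c then t y else None) = Some z \<Longrightarrow> z \<in> C"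
    using "1.IH" by blast
  show ?case
  proof (cases "y = c")
    case False
    then have "z \<in> C"
      using IH[of y] C(2) "1.prems" by simp
    then show ?thesis
      using components_subset[OF C(1)] by auto
  qed (use c "1.hyps"(2) "1.prems" in auto)
qed

lemma component_child_unique:
  assumes C: "C \<in> components E (S - {r})"
    and c: "c \<in> C" "search_tree E C (branch t C c)" and y: "y \<in> C" "t y = Some r"
  shows "y = c"
proof (rule ccontr)
  assume "y \<noteq> c"
  then have "branch t C c y = Some r"
    using y by (simp add: branch_def)
  then have "r \<in> C"
    by (rule search_tree_parent_in[OF c(2)])
  then show False
    using components_subset[OF C] by auto
qed

lemma search_tree_induct [consumes 1, case_names search_tree_at]:
  assumes "search_tree E S t"
    and step: "\<And>S t r. search_tree_at E S t r \<Longrightarrow>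
      (\<And>C c. C \<in> components E (S - {r}) \<Longrightarrow> c \<in> C \<Longrightarrow> t c = Some r \<Longrightarrow> P C (branch t C c))
      \<Longrightarrow> P S t"
  shows "P S t"
  using assms(1)
proof (induction rule: search_tree.induct)
  case (1 S r t)
  have at: "search_tree_at E S t r"
    using 1 unfolding search_tree_at_def branch_def by blast
  show ?case
  proof (rule step[OF at])
    fix C c
    assume C: "C \<in> components E (S - {r})" and c: "c \<in> C" "t c = Some r"
    obtain c' where c': "c' \<in> C" "search_tree E C (branch t C c')" "P C (branch t C c')"
      using "1.IH" C unfolding branch_def by blast
    then show "P C (branch t C c)"
      using component_child_unique[OF C c'(1,2) c] by simp
  qed
qed

lemma search_tree_root_unique:
  "search_tree E S t \<Longrightarrow> y \<in> S \<Longrightarrow> t y = None \<Longrightarrow> z \<in> S \<Longrightarrow> t z = None \<Longrightarrow> y = z"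
proof (induction arbitrary: y z rule: search_tree_induct)
  case (search_tree_at S t r)
  have "y = r" if y: "y \<in> S" "t y = None" for y
  proof (rule ccontr)
    assume "y \<noteq> r"
    then obtain C c where C: "C \<in> components E (S - {r})" "y \<in> C" and c: "c \<in> C" "t c = Some r"
      using search_tree_at_nonrootE[OF search_tree_at.hyps, of y] y(1) by blast
    have "y = c"
      using search_tree_at.IH[OF C(1) c, of y c] C(2) c(1) y(2) by (simp add: branch_def)
    then show False
      using c(2) y(2) by simp
  qed
  then show ?case
    using search_tree_at.prems by metis
qed

lemma search_tree_at_iff_root:
  "search_tree E S t \<Longrightarrow> search_tree_at E S t r \<longleftrightarrow> r \<in> S \<and> t r = None"
  using search_tree_root_unique by (metis search_tree_atD(2,3) search_tree_iff_at)

lemma search_tree_at_nonroot: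
  assumes "search_tree_at E S t r" and "y \<in> S" and "y \<noteq> r"
  shows "t y \<noteq> None"
  using search_tree_root_unique[OF search_tree_at_imp_search_tree[OF assms(1)] assms(2) _
      search_tree_atD(2,3)[OF assms(1)]] assms(3)
  by blast

lemma subtree_subset: "search_tree E S t \<Longrightarrow> y \<in> S \<Longrightarrow> subtree t y \<subseteq> S"
  by (metis search_tree_child_in subsetI subtree_parent)

lemma finite_search_trees:
  assumes "finite S"
  shows "finite {t. search_tree E S t}"
proof (rule finite_subset)
  show "{t. search_tree E S t} \<subseteq> {t. \<forall>y. (y \<in> S \<longrightarrow> t y \<in> insert None (Some ` S)) \<and> (y \<notin> S \<longrightarrow> t y = None)}"
    using search_tree_outside search_tree_parent_in by fastforce
  show "finite {t. \<forall>y. (y \<in> S \<longrightarrow> t y \<in> insert None (Some ` S)) \<and> (y \<notin> S \<longrightarrow> t y = None)}"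
    using assms by (intro finite_set_of_finite_funs) auto
qed

lemma reachable_in_branch:
  assumes "symp E" and at: "search_tree_at E S t r" and C: "C \<in> components E (S - {r})"
    and c: "c \<in> C" "t c = Some r" "search_tree E C (branch t C c)"
    and "(y, w) \<in> (parent_rel t)\<^sup>*" and "w \<in> C"
  shows "y \<in> C \<and> (y, w) \<in> (parent_rel (branch t C c))\<^sup>*"
  using \<open>(y, w) \<in> _\<close>
proof (induction rule: converse_rtrancl_induct)
  case base
  then show ?case
    using \<open>w \<in> C\<close> by simp
next
  case (step y y')
  have yy': "t y = Some y'" and y'C: "y' \<in> C"
    using step by auto
  have "r \<notin> C"
    using components_subset[OF C] by auto
  obtain D d where D: "D \<in> components E (S - {r})" "y \<in> D"
    and d: "d \<in> D" "t d = Some r" "search_tree E D (branch t D d)"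
    using search_tree_at_nonrootE[OF at search_tree_at_child_nonroot[OF at yy']] .
  have "y \<noteq> d"
    using d(2) yy' y'C \<open>r \<notin> C\<close> by auto
  then have "branch t D d y = Some y'"
    using D(2) yy' by (simp add: branch_def)
  then have "y' \<in> D"
    by (rule search_tree_parent_in[OF d(3)])
  then have "D = C"
    using components_disjoint[OF \<open>symp E\<close> D(1) C _ y'C] by simp
  moreover have "y \<noteq> c"
    using c(2) yy' y'C \<open>r \<notin> C\<close> by auto
  ultimately have "(y, y') \<in> parent_rel (branch t C c)"
    using D(2) yy' by (simp add: branch_def)
  then show ?case
    using D(2) \<open>D = C\<close> step.IH by (auto intro: converse_rtrancl_into_rtrancl)
qed

lemma subtree_branch:
  assumes "symp E" and "search_tree_at E S t r" and "C \<in> components E (S - {r})"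
    and "c \<in> C" "t c = Some r" "search_tree E C (branch t C c)" and "w \<in> C"
  shows "subtree t w = subtree (branch t C c) w"
proof
  show "subtree t w \<subseteq> subtree (branch t C c) w"
    using reachable_in_branch[OF assms(1-6) _ assms(7)] by (auto simp: subtree_iff)
  show "subtree (branch t C c) w \<subseteq> subtree t w"
    using rtrancl_mono[OF parent_rel_branch_subset, of t C c] by (auto simp: subtree_iff)
qed

lemma subtree_root:
  "search_tree E S t \<Longrightarrow> r \<in> S \<Longrightarrow> t r = None \<Longrightarrow> subtree t r = S"
proof (induction arbitrary: r rule: search_tree_induct)
  case (search_tree_at S t r0)
  note at = search_tree_at.hyps(1)
  have "r = r0"
    using search_tree_at_nonroot[OF at search_tree_at.prems(1)] search_tree_at.prems(2) by blast
  have "y \<in> subtree t r" if "y \<in> S" for y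
  proof (cases "y = r")
    case False
    then obtain C c where C: "C \<in> components E (S - {r})" "y \<in> C" and c: "c \<in> C" "t c = Some r"
      using search_tree_at_nonrootE[OF at, of y] \<open>y \<in> S\<close> \<open>r = r0\<close> by blast
    have "y \<in> subtree (branch t C c) c"
      using search_tree_at.IH[of C c c] C c \<open>r = r0\<close> by (simp add: branch_def)
    then have "y \<in> subtree t c"
      using rtrancl_mono[OF parent_rel_branch_subset, of t C c] by (auto simp: subtree_iff)
    then show ?thesis
      using subtree_child[of t c r, OF c(2)] by (rule subtree_trans)
  qed simp
  moreover have "subtree t r \<subseteq> S"
    using subtree_subset[OF search_tree_at_imp_search_tree[OF at] search_tree_at.prems(1)] .
  ultimately show ?case
    by blast
qed

lemma acyclic_parent_rel:
  "search_tree E S t \<Longrightarrow> symp E \<Longrightarrow> acyclic (parent_rel t)"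
proof (induction rule: search_tree_induct)
  case (search_tree_at S t r)
  note at = search_tree_at.hyps(1)
  have "(y, y) \<notin> (parent_rel t)\<^sup>+" for y
  proof
    assume "(y, y) \<in> (parent_rel t)\<^sup>+"
    then obtain z where yz: "t y = Some z" and zy: "(z, y) \<in> (parent_rel t)\<^sup>*"
      by (auto dest: tranclD)
    obtain C c where C: "C \<in> components E (S - {r})" "y \<in> C"
      and c: "c \<in> C" "t c = Some r" "search_tree E C (branch t C c)"
      using search_tree_at_nonrootE[OF at search_tree_at_child_nonroot[OF at yz]] .
    have acyc: "acyclic (parent_rel (branch t C c))"
      using search_tree_at.IH[OF C(1) c(1,2) search_tree_at.prems] .
    have zC: "z \<in> C" and zy': "(z, y) \<in> (parent_rel (branch t C c))\<^sup>*"
      using reachable_in_branch[OF search_tree_at.prems at C(1) c zy C(2)] by auto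
    have "y \<noteq> c"
      using c(2) yz zC components_subset[OF C(1)] by auto
    then have "(y, z) \<in> parent_rel (branch t C c)"
      using yz C(2) by (simp add: branch_def)
    then have "(y, y) \<in> (parent_rel (branch t C c))\<^sup>+"
      using zy' by (rule rtrancl_into_trancl2)
    then show False
      using acyc by (simp add: acyclic_def)
  qed
  then show ?case
    by (simp add: acyclic_def)
qed

lemma subtree_antisym:
  assumes "acyclic (parent_rel t)" and "y \<in> subtree t w" and "w \<in> subtree t y"
  shows "y = w"
proof (rule ccontr)
  assume "y \<noteq> w"
  then have "(y, w) \<in> (parent_rel t)\<^sup>+"
    using assms(2) by (simp add: subtree_iff rtrancl_eq_or_trancl)
  moreover have "(w, y) \<in> (parent_rel t)\<^sup>*"
    using assms(3) by (simp add: subtree_iff)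
  ultimately have "(y, y) \<in> (parent_rel t)\<^sup>+"
    by (rule trancl_rtrancl_trancl)
  then show False
    using assms(1) by (simp add: acyclic_def)
qed

lemma parent_not_in_subtree:
  assumes "acyclic (parent_rel t)" and "t y = Some z"
  shows "z \<notin> subtree t y"
proof
  assume "z \<in> subtree t y"
  then have "z = y"
    using subtree_antisym[OF assms(1) _ subtree_child[of t y z, OF assms(2)]] by blast
  moreover have "(y, z) \<in> (parent_rel t)\<^sup>+"
    using assms(2) by auto
  ultimately show False
    using assms(1) by (simp add: acyclic_def)
qed

lemma connected_on_subtree:
  "search_tree E S t \<Longrightarrow> symp E \<Longrightarrow> w \<in> S \<Longrightarrow> connected_on E (subtree t w)"
proof (induction arbitrary: w rule: search_tree_induct)
  case (search_tree_at S t r)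
  note at = search_tree_at.hyps(1)
  show ?case
  proof (cases "w = r")
    case True
    then show ?thesis
      using subtree_root[OF search_tree_at_imp_search_tree[OF at]] search_tree_atD(1-3)[OF at] by simp
  next
    case False
    then obtain C c where C: "C \<in> components E (S - {r})" "w \<in> C"
      and c: "c \<in> C" "t c = Some r" "search_tree E C (branch t C c)"
      using search_tree_at_nonrootE[OF at, of w] search_tree_at.prems(2) by blast
    have "connected_on E (subtree (branch t C c) w)"
      using search_tree_at.IH[OF C(1) c(1,2) search_tree_at.prems(1) C(2)] .
    then show ?thesis
      using subtree_branch[OF search_tree_at.prems(1) at C(1) c C(2)] by simp
  qed
qed

lemma subtree_component_child:
  assumes "symp E" and at: "search_tree_at E S t r" and C: "C \<in> components E (S - {r})"
    and c: "c \<in> C" "t c = Some r" "search_tree E C (branch t C c)"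
  shows "subtree t c = C"
  using subtree_branch[OF assms c(1)] subtree_root[OF c(3) c(1)] by (simp add: branch_def)

lemma sibling_subtrees_separated:
  "search_tree E S t \<Longrightarrow> symp E \<Longrightarrow> t y = Some p \<Longrightarrow> t z = Some p \<Longrightarrow> y \<noteq> z \<Longrightarrow>
    a \<in> subtree t y \<Longrightarrow> b \<in> subtree t z \<Longrightarrow> a \<noteq> b \<and> \<not> E a b"
proof (induction arbitrary: y z p a b rule: search_tree_induct)
  case (search_tree_at S t r)
  note at = search_tree_at.hyps(1)
  note sym = search_tree_at.prems(1) and yp = search_tree_at.prems(2) and zp = search_tree_at.prems(3)
  obtain C c where C: "C \<in> components E (S - {r})" "y \<in> C"
    and c: "c \<in> C" "t c = Some r" "search_tree E C (branch t C c)"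
    using search_tree_at_nonrootE[OF at search_tree_at_child_nonroot[OF at yp]] .
  show ?case
  proof (cases "p = r")
    case True
    obtain D d where D: "D \<in> components E (S - {r})" "z \<in> D"
      and d: "d \<in> D" "t d = Some r" "search_tree E D (branch t D d)"
      using search_tree_at_nonrootE[OF at search_tree_at_child_nonroot[OF at zp]] .
    have "y = c" "z = d"
      using component_child_unique[OF C(1) c(1,3) C(2)] component_child_unique[OF D(1) d(1,3) D(2)]
        yp zp True by auto
    then have "a \<in> C" "b \<in> D" "C \<noteq> D"
      using subtree_component_child[OF sym at C(1) c] subtree_component_child[OF sym at D(1) d]
        component_child_unique[OF C(1) c(1,3)] d(1,2) search_tree_at.prems(4-6) by auto
    then show ?thesis
      using components_separated[OF sym C(1) D(1)] by blast
  next
    case False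
    then have yc: "y \<noteq> c"
      using yp c(2) by auto
    then have "p \<in> C"
      using search_tree_parent_in[OF c(3), of y] yp C(2) by (simp add: branch_def)
    moreover have "(z, p) \<in> (parent_rel t)\<^sup>*"
      using zp by (intro r_into_rtrancl) simp
    ultimately have zC: "z \<in> C"
      using reachable_in_branch[OF sym at C(1) c] by blast
    have "z \<noteq> c"
      using zp c(2) False by auto
    then have "branch t C c y = Some p" "branch t C c z = Some p"
      using yc yp zp C(2) zC by (simp_all add: branch_def)
    then show ?thesis
      using search_tree_at.IH[OF C(1) c(1,2) sym _ _ search_tree_at.prems(4)]
        subtree_branch[OF sym at C(1) c C(2)] subtree_branch[OF sym at C(1) c zC]
        search_tree_at.prems(5,6) by simp
  qed
qed

lemma search_tree_cong:
  "search_tree E S t \<Longrightarrow> \<forall>a\<in>S. \<forall>b\<in>S. E a b = E' a b \<Longrightarrow> search_tree E' S t"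
proof (induction rule: search_tree_induct)
  case (search_tree_at S t r)
  note at = search_tree_at.hyps(1)
  have agree: "\<forall>a\<in>S - {r}. \<forall>b\<in>S - {r}. E a b = E' a b"
    using search_tree_at.prems by blast
  have "search_tree_at E' S t r"
    unfolding search_tree_at_def
  proof (intro conjI ballI)
    show "connected_on E' S"
      using search_tree_atD(1)[OF at] connected_on_cong[OF search_tree_at.prems] by simp
    show "r \<in> S" "t r = None" "\<forall>x. x \<notin> S \<longrightarrow> t x = None"
      using search_tree_atD(2-4)[OF at] by auto
  next
    fix C
    assume "C \<in> components E' (S - {r})"
    then have C: "C \<in> components E (S - {r})"
      using components_cong[OF agree] by simp
    obtain c where c: "c \<in> C" "t c = Some r"
      using search_tree_at_componentE[OF at C] by blast
    have "\<forall>a\<in>C. \<forall>b\<in>C. E a b = E' a b"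
      using search_tree_at.prems components_subset[OF C] by blast
    then show "\<exists>c\<in>C. t c = Some r \<and> search_tree E' C (branch t C c)"
      using search_tree_at.IH[OF C c] c by blast
  qed
  then show ?case
    by (rule search_tree_at_imp_search_tree)
qed

section \<open>Adding a root\<close>

definition add_root :: "'a \<Rightarrow> 'a set \<Rightarrow> ('a \<Rightarrow> 'a option) \<Rightarrow> 'a \<Rightarrow> 'a option" where
  "add_root r S t = (\<lambda>y. if y \<in> S \<and> t y = None then Some r else t y)"

lemma search_tree_add_root:
  assumes "symp E" and "r \<notin> S" and "connected_on E (insert r S)" and "connected_on E S"
    and st: "search_tree E S t"
  shows "search_tree E (insert r S) (add_root r S t)"
proof -
  obtain c where at: "search_tree_at E S t c"
    using st unfolding search_tree_iff_at by blast
  have c: "c \<in> S" "t c = None"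
    using search_tree_atD(2,3)[OF at] by auto
  have branch_eq: "branch (add_root r S t) S c = t"
  proof
    fix y
    show "branch (add_root r S t) S c y = t y"
      using search_tree_at_nonroot[OF at, of y] search_tree_outside[OF st, of y] c(2)
      by (cases "y = c") (auto simp: branch_def add_root_def)
  qed
  have "search_tree_at E (insert r S) (add_root r S t) r"
    unfolding search_tree_at_def
  proof (intro conjI ballI)
    show "connected_on E (insert r S)" "r \<in> insert r S"
      using assms(3) by auto
    show "add_root r S t r = None" "\<forall>x. x \<notin> insert r S \<longrightarrow> add_root r S t x = None"
      using search_tree_outside[OF st] assms(2) by (auto simp: add_root_def)
  next
    fix C
    assume "C \<in> components E (insert r S - {r})"
    then have "C = S"
      using components_of_connected[OF assms(1,4)] assms(2) by simp
    moreover have "add_root r S t c = Some r"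
      using c by (simp add: add_root_def)
    ultimately show "\<exists>c\<in>C. add_root r S t c = Some r \<and> search_tree E C (branch (add_root r S t) C c)"
      using c(1) branch_eq st by auto
  qed
  then show ?thesis
    by (rule search_tree_at_imp_search_tree)
qed

lemma subtree_add_root:
  assumes st: "search_tree E S t" and "r \<notin> S" and "w \<noteq> r"
  shows "subtree (add_root r S t) w = subtree t w"
proof
  have "parent_rel t \<subseteq> parent_rel (add_root r S t)"
    by (auto simp: add_root_def)
  from rtrancl_mono[OF this] show "subtree t w \<subseteq> subtree (add_root r S t) w"
    by (auto simp: subtree_iff)
  have "t r = None"
    using search_tree_outside[OF st \<open>r \<notin> S\<close>] .
  have "(y, w) \<in> (parent_rel t)\<^sup>*" if "(y, w) \<in> (parent_rel (add_root r S t))\<^sup>*" for y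
    using that
  proof (induction rule: converse_rtrancl_induct)
    case (step y y')
    show ?case
    proof (cases "t y = Some y'")
      case True
      then show ?thesis
        using step.IH by (simp add: converse_rtrancl_into_rtrancl)
    next
      case False
      then have "y' = r"
        using step.hyps(1) by (auto simp: add_root_def split: if_splits)
      then have "(r, w) \<in> (parent_rel t)\<^sup>*"
        using step.IH by simp
      then show ?thesis
        using \<open>w \<noteq> r\<close> \<open>t r = None\<close> by (cases rule: converse_rtranclE) auto
    qed
  qed simp
  then show "subtree (add_root r S t) w \<subseteq> subtree t w"
    by (auto simp: subtree_iff)
qed

lemma rotate_add_root:
  assumes st: "search_tree E S t" and "symp E" and "r \<notin> S" and vu: "t v = Some u"
  shows "rotate E (add_root r S t) u v = add_root r S (rotate E t u v)"
proof
  fix y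
  have "v \<in> S" "u \<in> S"
    using search_tree_child_in[OF st vu] search_tree_parent_in[OF st vu] .
  moreover have "u \<noteq> v"
    using parent_not_in_subtree[OF acyclic_parent_rel[OF st \<open>symp E\<close>] vu] by auto
  moreover have "subtree (add_root r S t) y = subtree t y" if "t y = Some v"
    using subtree_add_root[OF st \<open>r \<notin> S\<close>, of y] search_tree_child_in[OF st that] \<open>r \<notin> S\<close>
    by fastforce
  ultimately show "rotate E (add_root r S t) u v y = add_root r S (rotate E t u v) y"
    using \<open>r \<notin> S\<close> by (auto simp: rotate_def add_root_def)
qed

lemma rot_adj_add_root:
  assumes "search_tree E S t1" and "search_tree E S t2" and "symp E" and "r \<notin> S"
    and "rot_adj E t1 t2"
  shows "rot_adj E (add_root r S t1) (add_root r S t2)"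
proof -
  have parent: "add_root r S t v = Some u" if "t v = Some u" for t v u
    using that by (simp add: add_root_def)
  show ?thesis
    using assms(5) unfolding rot_adj_def
    using rotate_add_root[OF assms(1,3,4)] rotate_add_root[OF assms(2,3,4)] parent by metis
qed

section \<open>A pentagon in the rotation graph\<close>

lemma rot_adjI: "t v = Some u \<Longrightarrow> rotate E t u v = t' \<Longrightarrow> rot_adj E t t'"
  unfolding rot_adj_def by blast

definition rotation_pentagon :: "('a \<Rightarrow> 'a \<Rightarrow> bool) \<Rightarrow> 'a set \<Rightarrow> bool" where
  "rotation_pentagon E S \<longleftrightarrow> (\<exists>t0 t1 t2 t3 t4. (\<forall>t\<in>{t0, t1, t2, t3, t4}. search_tree E S t) \<and>
     rot_adj E t0 t1 \<and> rot_adj E t1 t2 \<and> rot_adj E t2 t3 \<and> rot_adj E t3 t4 \<and> rot_adj E t4 t0)"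

lemma search_tree_singleton: "search_tree E {y} (\<lambda>_. None)"
proof -
  have "search_tree_at E {y} (\<lambda>_. None) y"
    by (simp add: search_tree_at_def connected_on_def components_def)
  then show ?thesis
    by (rule search_tree_at_imp_search_tree)
qed

lemma search_tree_chain:
  assumes "symp E" and "distinct [p, q, s]" and "connected_on E {p, q, s}" and "E q s"
  shows "search_tree E {p, q, s} ((\<lambda>_. None)(q := Some p, s := Some q))"
proof -
  have conn: "connected_on E {q, s}"
    using connected_on_if_dominating[OF assms(1), of q "{q, s}"] \<open>E q s\<close> by auto
  have "connected_on E {s}"
    by (simp add: connected_on_def)
  then have "search_tree E (insert q {s}) (add_root q {s} (\<lambda>_. None))"
    using assms(2) conn by (intro search_tree_add_root[OF assms(1)] search_tree_singleton) auto
  then have "search_tree E (insert p {q, s}) (add_root p {q, s} (add_root q {s} (\<lambda>_. None)))"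
    using assms(2,3) by (intro search_tree_add_root[OF assms(1) _ _ conn]) auto
  moreover have "add_root p {q, s} (add_root q {s} (\<lambda>_. None)) = (\<lambda>_. None)(q := Some p, s := Some q)"
    using assms(2) by (auto simp: add_root_def)
  ultimately show ?thesis
    by simp
qed

lemma search_tree_two_leaves:
  assumes "symp E" and "distinct [a, k, b]" and "E a k" "E k b" "\<not> E a b"
  shows "search_tree E {a, k, b} ((\<lambda>_. None)(a := Some k, b := Some k))"
    (is "search_tree E ?P ?t")
proof -
  have single: "{y} \<in> components E {a, b}" if "y \<in> {a, b}" for y
    using assms that by (intro componentI) (auto simp: connected_on_def symp_def)
  have comps: "components E (?P - {k}) = {{a}, {b}}"
  proof -
    have "?P - {k} = {a, b}"
      using assms(2) by auto
    moreover have "D \<in> {{a}, {b}}" if D: "D \<in> components E {a, b}" for D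
    proof -
      obtain y where "y \<in> D"
        using components_nonempty[OF D] by blast
      moreover have "y \<in> {a, b}"
        using \<open>y \<in> D\<close> components_subset[OF D] by blast
      ultimately show ?thesis
        using components_disjoint[OF assms(1) D single] by auto
    qed
    ultimately show ?thesis
      using single by auto
  qed
  have "search_tree_at E ?P ?t k"
    unfolding search_tree_at_def comps
  proof (intro conjI ballI)
    show "connected_on E ?P"
      using assms by (intro connected_on_if_dominating[OF assms(1), of k]) (auto simp: symp_def)
    show "k \<in> ?P" "?t k = None" "\<forall>x. x \<notin> ?P \<longrightarrow> ?t x = None"
      using assms(2) by auto
  next
    fix C
    assume "C \<in> {{a}, {b}}"
    moreover have "branch ?t {y} y = (\<lambda>_. None)" for y
      by (auto simp: branch_def)
    ultimately show "\<exists>c\<in>C. ?t c = Some k \<and> search_tree E C (branch ?t C c)"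
      using search_tree_singleton by auto
  qed
  then show ?thesis
    by (rule search_tree_at_imp_search_tree)
qed

lemma rotation_pentagon_path:
  assumes "symp E" and "distinct [a, k, b]" and "E a k" "E k b" "\<not> E a b"
  shows "rotation_pentagon E {a, k, b}"
proof -
  define chain :: "'a \<Rightarrow> 'a \<Rightarrow> 'a \<Rightarrow> 'a \<Rightarrow> 'a option"
    where "chain p q s = (\<lambda>_. None)(q := Some p, s := Some q)" for p q s
  define fork :: "'a \<Rightarrow> 'a option" where "fork = (\<lambda>_. None)(a := Some k, b := Some k)"
  have E: "E k a" "E b k" "\<not> E b a"
    using assms(1,3-5) by (auto simp: symp_def)
  have conn: "connected_on E {a, k, b}"
    using assms(1-4) E by (intro connected_on_if_dominating[of E k]) auto
  have chain: "search_tree E {a, k, b} (chain p q s)"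
    if "{p, q, s} = {a, k, b}" "distinct [p, q, s]" "E q s" for p q s
    using search_tree_chain[OF assms(1) that(2) _ that(3)] conn that(1) by (simp add: chain_def)
  have trees: "\<forall>t\<in>{fork, chain a k b, chain a b k, chain b a k, chain b k a}. search_tree E {a, k, b} t"
    using search_tree_two_leaves[OF assms] assms(2-4) E
    by (auto simp: fork_def intro!: chain)
  have leaves: "subtree (chain a b k) k = {k}" "subtree (chain b k a) a = {a}"
    using assms(2) by (auto simp: chain_def split: if_splits intro!: subtree_leaf)
  note defs = rotate_def chain_def fork_def fun_eq_iff
  have "rot_adj E fork (chain a k b)"
    using assms(2) by (intro rot_adjI[of fork a k]) (auto simp: defs)
  moreover have "rot_adj E (chain a k b) (chain a b k)"
    using assms(2) by (intro rot_adjI[of "chain a k b" b k]) (auto simp: defs)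
  moreover have "rot_adj E (chain a b k) (chain b a k)"
    using assms(2,3) leaves(1) by (intro rot_adjI[of "chain a b k" b a]) (auto simp: defs)
  moreover have "rot_adj E (chain b a k) (chain b k a)"
    using assms(2) by (intro rot_adjI[of "chain b a k" k a]) (auto simp: defs)
  moreover have "rot_adj E (chain b k a) fork"
    using assms(2) E(3) leaves(2) by (intro rot_adjI[of "chain b k a" k b]) (auto simp: defs)
  ultimately show ?thesis
    unfolding rotation_pentagon_def using trees by blast
qed

lemma rotation_pentagon_insert:
  assumes "rotation_pentagon E S" and "symp E" and "r \<notin> S"
    and "connected_on E (insert r S)" and "connected_on E S"
  shows "rotation_pentagon E (insert r S)"
proof -
  obtain t0 t1 t2 t3 t4 where trees: "\<forall>t\<in>{t0, t1, t2, t3, t4}. search_tree E S t"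
    and adj: "rot_adj E t0 t1" "rot_adj E t1 t2" "rot_adj E t2 t3" "rot_adj E t3 t4" "rot_adj E t4 t0"
    using assms(1) unfolding rotation_pentagon_def by blast
  let ?lift = "add_root r S"
  have "\<forall>t\<in>{?lift t0, ?lift t1, ?lift t2, ?lift t3, ?lift t4}. search_tree E (insert r S) t"
    using trees search_tree_add_root[OF assms(2-5)] by blast
  moreover have "rot_adj E (?lift t0) (?lift t1)" "rot_adj E (?lift t1) (?lift t2)"
    "rot_adj E (?lift t2) (?lift t3)" "rot_adj E (?lift t3) (?lift t4)" "rot_adj E (?lift t4) (?lift t0)"
    using adj trees by (auto intro: rot_adj_add_root[OF _ _ assms(2,3)])
  ultimately show ?thesis
    unfolding rotation_pentagon_def by blast
qed

lemma rotation_pentagon_if_dominating: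
  assumes "symp E" and "finite V" and "k \<in> V" and dom: "\<forall>w\<in>V. w \<noteq> k \<longrightarrow> E k w"
    and "a \<in> V" "b \<in> V" "a \<noteq> b" "\<not> E a b"
  shows "rotation_pentagon E V"
proof -
  let ?P = "{a, k, b}"
  have "a \<noteq> k" "b \<noteq> k"
    using assms(1,5-8) dom by (auto simp: symp_def)
  then have "E a k" "E k b" "distinct [a, k, b]"
    using assms(1,5-7) dom by (auto simp: symp_def)
  then have base: "rotation_pentagon E ?P"
    using rotation_pentagon_path[OF assms(1)] \<open>\<not> E a b\<close> by blast
  have conn: "connected_on E S" if "k \<in> S" "S \<subseteq> V" for S
    using connected_on_if_dominating[OF assms(1) that(1)] dom that(2) by blast
  have grow: "rotation_pentagon E (?P \<union> F)" if "finite F" "F \<subseteq> V - ?P" for F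
    using that
  proof (induction F rule: finite_induct)
    case (insert r F)
    then have "rotation_pentagon E (insert r (?P \<union> F))"
      using assms(3,5,6) by (intro rotation_pentagon_insert[OF _ assms(1)] conn) auto
    then show ?case
      by simp
  qed (simp add: base)
  have "?P \<union> (V - ?P) = V"
    using assms(3,5,6) by auto
  then show ?thesis
    using grow[of "V - ?P"] assms(2) by simp
qed

section \<open>Colourings\<close>

definition colorable :: "'b set \<Rightarrow> ('b \<Rightarrow> 'b \<Rightarrow> bool) \<Rightarrow> nat \<Rightarrow> bool" where
  "colorable W A k \<longleftrightarrow> (\<exists>f. (\<forall>x\<in>W. f x < k) \<and> (\<forall>x\<in>W. \<forall>y\<in>W. A x y \<longrightarrow> f x \<noteq> (f y :: nat)))"

lemma chromatic_number_le: "colorable W A k \<Longrightarrow> chromatic_number W A \<le> k"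
  unfolding chromatic_number_def colorable_def by (rule Least_le)

lemma colorable_card:
  assumes "finite W" and "\<forall>x\<in>W. \<not> A x x"
  shows "colorable W A (card W)"
proof -
  obtain h where h: "bij_betw h W {0..<card W}"
    using ex_bij_betw_finite_nat[OF assms(1)] by blast
  then have "\<forall>x\<in>W. \<forall>y\<in>W. A x y \<longrightarrow> h x \<noteq> h y"
    using assms(2) by (metis bij_betw_inv_into_left)
  moreover have "\<forall>x\<in>W. h x < card W"
    using h by (auto simp: bij_betw_def)
  ultimately show ?thesis
    unfolding colorable_def by blast
qed

lemma colorable_chromatic_number:
  assumes "finite W" and "\<forall>x\<in>W. \<not> A x x"
  shows "colorable W A (chromatic_number W A)"
  using colorable_card[of W A, OF assms] unfolding chromatic_number_def colorable_def by (rule LeastI)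

lemma three_le_if_rotation_pentagon:
  assumes "colorable {t. search_tree E S t} (rot_adj E) k" and "rotation_pentagon E S"
  shows "3 \<le> k"
proof -
  obtain f where f: "\<forall>t. search_tree E S t \<longrightarrow> f t < k"
    "\<forall>t t'. search_tree E S t \<longrightarrow> search_tree E S t' \<longrightarrow> rot_adj E t t' \<longrightarrow> f t \<noteq> f t'"
    using assms(1) unfolding colorable_def by auto
  obtain t0 t1 t2 t3 t4 where trees: "\<forall>t\<in>{t0, t1, t2, t3, t4}. search_tree E S t"
    and adj: "rot_adj E t0 t1" "rot_adj E t1 t2" "rot_adj E t2 t3" "rot_adj E t3 t4" "rot_adj E t4 t0"
    using assms(2) unfolding rotation_pentagon_def by blast
  have "f t0 \<noteq> f t1" "f t1 \<noteq> f t2" "f t2 \<noteq> f t3" "f t3 \<noteq> f t4" "f t4 \<noteq> f t0"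
    using f(2) trees adj by auto
  moreover have "f t0 < k" "f t1 < k" "f t2 < k" "f t3 < k" "f t4 < k"
    using f(1) trees by auto
  ultimately show ?thesis
    by linarith
qed

lemma colorable_hom:
  assumes "colorable W' A' k" and "\<And>a. a \<in> W \<Longrightarrow> h a \<in> W'"
    and "\<And>a b. a \<in> W \<Longrightarrow> b \<in> W \<Longrightarrow> A a b \<Longrightarrow> A' (h a) (h b)"
  shows "colorable W A k"
proof -
  obtain f where "\<forall>y\<in>W'. f y < k" "\<forall>y\<in>W'. \<forall>z\<in>W'. A' y z \<longrightarrow> f y \<noteq> (f z :: nat)"
    using assms(1) unfolding colorable_def by blast
  then have "(\<forall>a\<in>W. (f \<circ> h) a < k) \<and> (\<forall>a\<in>W. \<forall>b\<in>W. A a b \<longrightarrow> (f \<circ> h) a \<noteq> (f \<circ> h) b)"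
    using assms(2,3) by auto
  then show ?thesis
    unfolding colorable_def by blast
qed

lemma rot_adj_irrefl:
  assumes "acyclic (parent_rel t)"
  shows "\<not> rot_adj E t t"
proof
  assume "rot_adj E t t"
  then obtain u v where vu: "t v = Some u" and "t = rotate E t u v"
    unfolding rot_adj_def by blast
  then have "t u = Some v"
    by (metis rotate_def)
  then have "u \<in> subtree t v"
    by (rule subtree_child)
  then show False
    using parent_not_in_subtree[OF assms vu] subtree_antisym[OF assms _ subtree_child[of t v u, OF vu]]
    by auto
qed

lemma colorable_chi_rotation_graph:
  assumes "finite S" and "symp E"
  shows "colorable {t. search_tree E S t} (rot_adj E) (chi_rotation_graph S E)"
  unfolding chi_rotation_graph_def
  using colorable_chromatic_number[OF finite_search_trees[OF assms(1)]]
    rot_adj_irrefl[OF acyclic_parent_rel[OF _ assms(2)]] by blast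

lemma mod_add_right_neq:
  fixes a b c m :: nat
  assumes "a < m" and "b < m" and "a \<noteq> b"
  shows "(a + c) mod m \<noteq> (b + c) mod m"
proof
  assume "(a + c) mod m = (b + c) mod m"
  then have "a mod m = b mod m"
    by (simp add: nat_mod_eq_iff)
  then show False
    using assms by simp
qed

lemma label_parity_neq: "Suc (n mod 2) \<noteq> (if b then Suc (Suc n mod 2) else 0)"
  by (cases b) presburger+

section \<open>Ancestors and rotations\<close>

definition ancestors :: "('a \<Rightarrow> 'a option) \<Rightarrow> 'a \<Rightarrow> 'a set" where
  "ancestors t y = {z. (y, z) \<in> (parent_rel t)\<^sup>+}"

lemma ancestors_root: "t y = None \<Longrightarrow> ancestors t y = {}"
  by (auto simp: ancestors_def dest: tranclD)

lemma ancestors_parent: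
  assumes "t y = Some p"
  shows "ancestors t y = insert p (ancestors t p)"
proof (intro set_eqI iffI)
  fix z
  assume "z \<in> ancestors t y"
  then obtain w where "t y = Some w" "(w, z) \<in> (parent_rel t)\<^sup>*"
    by (auto simp: ancestors_def dest: tranclD)
  then show "z \<in> insert p (ancestors t p)"
    using assms by (auto simp: ancestors_def rtrancl_eq_or_trancl)
next
  fix z
  assume "z \<in> insert p (ancestors t p)"
  then show "z \<in> ancestors t y"
    using assms by (auto simp: ancestors_def intro: trancl_into_trancl2)
qed

lemma finite_ancestors:
  assumes "search_tree E S t" and "finite S"
  shows "finite (ancestors t y)"
proof (rule finite_subset[OF _ assms(2)])
  show "ancestors t y \<subseteq> S"
    using search_tree_parent_in[OF assms(1)] by (auto simp: ancestors_def dest: tranclD2)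
qed

lemma trancl_parent_rel_agree:
  assumes closed: "\<forall>a b. a \<in> N \<longrightarrow> t a = Some b \<longrightarrow> b \<in> N" and agree: "\<forall>a\<in>N. t' a = t a"
    and "(y, z) \<in> (parent_rel t)\<^sup>+" and "y \<in> N"
  shows "(y, z) \<in> (parent_rel t')\<^sup>+ \<and> z \<in> N"
  using assms(3)
proof (induction rule: trancl_induct)
  case (base z)
  then show ?case
    using closed agree \<open>y \<in> N\<close> by (auto intro: r_into_trancl)
next
  case (step a z)
  then show ?case
    using closed agree by (auto intro: trancl_into_trancl)
qed

lemma ancestors_cong:
  assumes "\<forall>a b. a \<in> N \<longrightarrow> t a = Some b \<longrightarrow> b \<in> N" and "\<forall>a\<in>N. t' a = t a" and "y \<in> N"
  shows "ancestors t' y = ancestors t y"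
proof -
  have closed': "\<forall>a b. a \<in> N \<longrightarrow> t' a = Some b \<longrightarrow> b \<in> N" and agree': "\<forall>a\<in>N. t a = t' a"
    using assms(1,2) by auto
  have "(y, z) \<in> (parent_rel t')\<^sup>+ \<longleftrightarrow> (y, z) \<in> (parent_rel t)\<^sup>+" for z
    using trancl_parent_rel_agree[OF assms(1,2) _ assms(3), of z]
      trancl_parent_rel_agree[OF closed' agree' _ assms(3), of z] by blast
  then show ?thesis
    by (simp add: ancestors_def)
qed

lemma rotate_has_child_iff:
  assumes "x \<noteq> u" "x \<noteq> v" "u \<noteq> v" and "t v = Some u"
  shows "(\<exists>y. rotate E t u v y = Some x) \<longleftrightarrow> (\<exists>y. t y = Some x)"
proof
  assume "\<exists>y. t y = Some x"
  then obtain y where "t y = Some x"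
    by blast
  then have "rotate E t u v (if y = u then v else y) = Some x"
    using assms by (auto simp: rotate_def)
  then show "\<exists>y. rotate E t u v y = Some x" ..
qed (use assms in \<open>auto simp: rotate_def split: if_splits\<close>)

lemma ancestors_rotate_outside:
  assumes vu: "t v = Some u" and "y \<notin> subtree t u"
  shows "ancestors (rotate E t u v) y = ancestors t y"
proof (rule ancestors_cong[where N = "- subtree t u"])
  show "\<forall>a b. a \<in> - subtree t u \<longrightarrow> t a = Some b \<longrightarrow> b \<in> - subtree t u"
  proof (intro allI impI)
    fix a b
    assume "a \<in> - subtree t u" and "t a = Some b"
    then show "b \<in> - subtree t u"
      using subtree_trans[OF subtree_child[of t a b]] by blast
  qed
  have v: "v \<in> subtree t u"
    using subtree_child[of t v u, OF vu] .
  have "rotate E t u v a = t a" if "a \<notin> subtree t u" for a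
  proof -
    have "t a \<noteq> Some v"
      using that subtree_trans[OF subtree_child[of t a v] v] by blast
    then show ?thesis
      using that v by (auto simp: rotate_def)
  qed
  then show "\<forall>a\<in>- subtree t u. rotate E t u v a = t a"
    by simp
qed (use assms in simp)

lemma ancestors_rotate_parent:
  assumes "acyclic (parent_rel t)" and vu: "t v = Some u"
  shows "ancestors (rotate E t u v) v = ancestors t u"
proof -
  have "u \<noteq> v"
    using parent_not_in_subtree[OF assms] by auto
  then have rot_v: "rotate E t u v v = t u"
    by (simp add: rotate_def)
  show ?thesis
  proof (cases "t u")
    case None
    then show ?thesis
      using rot_v by (simp add: ancestors_root)
  next
    case (Some p)
    have "ancestors (rotate E t u v) p = ancestors t p"
      using ancestors_rotate_outside[OF vu parent_not_in_subtree[OF assms(1) Some]] .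
    then show ?thesis
      using rot_v Some by (simp add: ancestors_parent)
  qed
qed

lemma ancestors_rotate_down:
  assumes acyc: "acyclic (parent_rel t)" and vu: "t v = Some u"
  shows "ancestors (rotate E t u v) u = insert v (ancestors t u)" and "v \<notin> ancestors t u"
proof -
  have "rotate E t u v u = Some v"
    by (simp add: rotate_def)
  then show "ancestors (rotate E t u v) u = insert v (ancestors t u)"
    using ancestors_parent ancestors_rotate_parent[OF assms] by metis
  show "v \<notin> ancestors t u"
  proof
    assume "v \<in> ancestors t u"
    then have "(u, v) \<in> (parent_rel t)\<^sup>+"
      by (simp add: ancestors_def)
    moreover have "(v, u) \<in> parent_rel t"
      using vu by simp
    ultimately show False
      using acyc by (auto simp: acyclic_def dest: trancl_into_trancl)
  qed
qed

lemma ancestors_rotate_up: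
  assumes acyc: "acyclic (parent_rel t)" and vu: "t v = Some u"
  shows "ancestors t v = insert u (ancestors (rotate E t u v) v)" and "u \<notin> ancestors (rotate E t u v) v"
proof -
  show "ancestors t v = insert u (ancestors (rotate E t u v) v)"
    using ancestors_parent[of t v u, OF vu] ancestors_rotate_parent[OF assms] by simp
  show "u \<notin> ancestors (rotate E t u v) v"
    using acyc ancestors_rotate_parent[OF assms] by (simp add: ancestors_def acyclic_def)
qed

lemma ancestors_rotate_moved:
  assumes acyc: "acyclic (parent_rel t)" and vu: "t v = Some u" and wv: "t w = Some v"
    and moves: "\<exists>z\<in>subtree t w. E u z" and "a \<in> subtree t w"
  shows "ancestors (rotate E t u v) a = ancestors t a"
proof -
  let ?t' = "rotate E t u v"
  have v_notin: "v \<notin> subtree t w"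
    using parent_not_in_subtree[OF acyc wv] .
  have u_notin: "u \<notin> subtree t w"
    using v_notin subtree_trans[OF subtree_child[of t v u, OF vu]] by blast
  have "u \<noteq> v"
    using parent_not_in_subtree[OF acyc vu] by auto
  have "?t' w = Some u" "?t' u = Some v"
    using wv moves u_notin v_notin by (auto simp: rotate_def)
  then have top: "ancestors ?t' w = ancestors t w"
    using ancestors_parent[of ?t' w u] ancestors_parent[of ?t' u v] ancestors_parent[of t w v, OF wv]
      ancestors_parent[of t v u, OF vu] ancestors_rotate_parent[OF acyc vu] by auto
  have "(a, w) \<in> (parent_rel t)\<^sup>*"
    using \<open>a \<in> subtree t w\<close> by (simp add: subtree_iff)
  then show ?thesis
  proof (induction rule: converse_rtrancl_induct)
    case (step a a')
    have aa': "t a = Some a'" and a'_in: "a' \<in> subtree t w"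
      using step.hyps by (auto simp: subtree_iff)
    then have "a \<in> subtree t w"
      using subtree_trans[OF subtree_child[of t a a']] by blast
    then have "?t' a = t a"
      using u_notin v_notin a'_in aa' by (auto simp: rotate_def)
    then show ?case
      using aa' step.IH by (simp add: ancestors_parent)
  qed (use top in simp)
qed

section \<open>Deleting a vertex\<close>

definition delete_vertex :: "'a \<Rightarrow> ('a \<Rightarrow> 'a option) \<Rightarrow> 'a \<Rightarrow> 'a option" where
  "delete_vertex x t = (\<lambda>y. if y = x then None else if t y = Some x then t x else t y)"

definition nonseparating :: "('a \<Rightarrow> 'a \<Rightarrow> bool) \<Rightarrow> 'a \<Rightarrow> bool" where
  "nonseparating E x \<longleftrightarrow> (\<forall>S. x \<in> S \<longrightarrow> connected_on E S \<longrightarrow> S \<noteq> {x} \<longrightarrow> connected_on E (S - {x}))"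

lemma delete_vertex_root:
  assumes "symp E" and at: "search_tree_at E S t r" and conn: "connected_on E (S - {r})"
  obtains c where "c \<in> S - {r}" "t c = Some r" "\<And>y. t y = Some r \<Longrightarrow> y = c"
    "search_tree E (S - {r}) (branch t (S - {r}) c)" "delete_vertex r t = branch t (S - {r}) c"
proof -
  have comp: "S - {r} \<in> components E (S - {r})"
    using components_of_connected[OF assms(1) conn] by simp
  then obtain c where c: "c \<in> S - {r}" "t c = Some r" "search_tree E (S - {r}) (branch t (S - {r}) c)"
    using search_tree_at_componentE[OF at] by blast
  have unique: "y = c" if "t y = Some r" for y
    using component_child_unique[OF comp c(1,3) search_tree_at_child_nonroot[OF at that] that] .
  have "delete_vertex r t y = branch t (S - {r}) c y" for y
    using unique[of y] c(2) search_tree_atD(3,4)[OF at]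
    by (auto simp: delete_vertex_def branch_def)
  then show thesis
    using that c unique by blast
qed

lemma branch_delete_vertex_outside:
  assumes "x \<notin> D" "x \<noteq> r"
    and d: "d \<in> D" "t d = Some r" "search_tree E D (branch t D d)"
  shows "delete_vertex x t d = Some r" and "branch (delete_vertex x t) D d = branch t D d"
proof -
  show "delete_vertex x t d = Some r"
    using d(1,2) \<open>x \<notin> D\<close> \<open>x \<noteq> r\<close> by (auto simp: delete_vertex_def)
  have "t y \<noteq> Some x" if "y \<in> D" "y \<noteq> d" for y
    using search_tree_parent_in[OF d(3), of y x] that \<open>x \<notin> D\<close> by (auto simp: branch_def)
  then show "branch (delete_vertex x t) D d = branch t D d"
    using \<open>x \<notin> D\<close> by (auto simp: delete_vertex_def branch_def fun_eq_iff)
qed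

lemma branch_delete_vertex_inside:
  assumes "symp E" and nonsep: "nonseparating E x"
    and C0: "C0 \<in> components E (S - {r})" "x \<in> C0" "C0 \<noteq> {x}"
    and c0: "c0 \<in> C0" "t c0 = Some r" "search_tree E C0 (branch t C0 c0)"
    and IH: "search_tree E (C0 - {x}) (delete_vertex x (branch t C0 c0))"
  obtains c where "c \<in> C0 - {x}" "delete_vertex x t c = Some r"
    "search_tree E (C0 - {x}) (branch (delete_vertex x t) (C0 - {x}) c)"
proof (cases "c0 = x")
  case False
  have "branch (delete_vertex x t) (C0 - {x}) c0 = delete_vertex x (branch t C0 c0)"
    using False C0(2) by (auto simp: delete_vertex_def branch_def fun_eq_iff)
  moreover have "x \<noteq> r"
    using components_subset[OF C0(1)] C0(2) by auto
  then have "delete_vertex x t c0 = Some r"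
    using False c0(2) by (simp add: delete_vertex_def)
  ultimately show thesis
    using that[of c0] IH c0(1) False by simp
next
  case True
  let ?t0 = "branch t C0 x"
  have at0: "search_tree_at E C0 ?t0 x"
    using search_tree_at_iff_root[OF c0(3)] True C0(2) by (simp add: branch_def)
  have "connected_on E (C0 - {x})"
    using nonsep connected_on_component[OF assms(1) C0(1)] C0(2,3) by (simp add: nonseparating_def)
  then obtain c where c: "c \<in> C0 - {x}" "?t0 c = Some x" "\<And>y. ?t0 y = Some x \<Longrightarrow> y = c"
    and del0: "delete_vertex x ?t0 = branch ?t0 (C0 - {x}) c"
    using delete_vertex_root[OF assms(1) at0] by metis
  have "delete_vertex x t c = Some r"
    using c(1,2) c0(2) True by (simp add: delete_vertex_def branch_def)
  moreover have "branch (delete_vertex x t) (C0 - {x}) c = delete_vertex x ?t0"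
    using c(3) del0 by (auto simp: delete_vertex_def branch_def fun_eq_iff)
  ultimately show thesis
    using that[of c] c(1) IH True by simp
qed

lemma search_tree_delete_vertex:
  assumes "symp E" and "nonseparating E x"
  shows "search_tree E S t \<Longrightarrow> x \<in> S \<Longrightarrow> S \<noteq> {x} \<Longrightarrow> search_tree E (S - {x}) (delete_vertex x t)"
proof (induction rule: search_tree_induct)
  case (search_tree_at S t r)
  note at = search_tree_at.hyps(1)
  have conn: "connected_on E (S - {x})"
    using assms(2) search_tree_atD(1)[OF at] search_tree_at.prems by (simp add: nonseparating_def)
  show ?case
  proof (cases "r = x")
    case True
    then show ?thesis
      using delete_vertex_root[OF assms(1) at] conn by metis
  next
    case False
    obtain C0 c0 where C0: "C0 \<in> components E (S - {r})" "x \<in> C0"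
      and c0: "c0 \<in> C0" "t c0 = Some r" "search_tree E C0 (branch t C0 c0)"
      using search_tree_at_nonrootE[OF at, of x] search_tree_at.prems(1) False by blast
    have C0_conn: "C0 = {x} \<or> connected_on E (C0 - {x})"
      using assms(2) connected_on_component[OF assms(1) C0(1)] C0(2) by (auto simp: nonseparating_def)
    have comps: "components E (S - {x} - {r}) =
        (components E (S - {r}) - {C0}) \<union> (if C0 = {x} then {} else {C0 - {x}})"
    proof -
      have "S - {x} - {r} = S - {r} - {x}"
        by blast
      then show ?thesis
        using components_remove_vertex[OF assms(1) C0 C0_conn] by simp
    qed
    have "search_tree_at E (S - {x}) (delete_vertex x t) r"
      unfolding search_tree_at_def
    proof (intro conjI ballI)
      show "connected_on E (S - {x})" "r \<in> S - {x}" "delete_vertex x t r = None"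
        "\<forall>y. y \<notin> S - {x} \<longrightarrow> delete_vertex x t y = None"
        using conn search_tree_atD(2-4)[OF at] False by (auto simp: delete_vertex_def)
    next
      fix D
      assume D: "D \<in> components E (S - {x} - {r})"
      show "\<exists>d\<in>D. delete_vertex x t d = Some r \<and> search_tree E D (branch (delete_vertex x t) D d)"
      proof (cases "D \<in> components E (S - {r}) - {C0}")
        case True
        then have D': "D \<in> components E (S - {r})" and "x \<notin> D"
          using components_disjoint[OF assms(1) _ C0(1) _ C0(2)] by blast+
        obtain d where d: "d \<in> D" "t d = Some r" "search_tree E D (branch t D d)"
          using search_tree_at_componentE[OF at D'] .
        then show ?thesis
          using branch_delete_vertex_outside[OF \<open>x \<notin> D\<close> _ d] False by auto
      next
        case not_other: False
        then have "C0 \<noteq> {x}" "D = C0 - {x}"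
          using D comps by (auto split: if_splits)
        then show ?thesis
          using branch_delete_vertex_inside[OF assms C0 \<open>C0 \<noteq> {x}\<close> c0]
            search_tree_at.IH[OF C0(1) c0(1,2) C0(2) \<open>C0 \<noteq> {x}\<close>] \<open>D = C0 - {x}\<close> by metis
      qed
    qed
    then show ?thesis
      by (rule search_tree_at_imp_search_tree)
  qed
qed

lemma reachable_delete_vertex_imp_reachable:
  assumes "(z, y) \<in> (parent_rel (delete_vertex x t))\<^sup>*"
  shows "(z, y) \<in> (parent_rel t)\<^sup>*"
  using assms
proof (induction rule: converse_rtrancl_induct)
  case (step a b)
  then have "(a, b) \<in> (parent_rel t)\<^sup>*"
  proof (cases "t a = Some x")
    case True
    then have "(a, x) \<in> parent_rel t" "(x, b) \<in> parent_rel t"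
      using step.hyps(1) by (auto simp: delete_vertex_def split: if_splits)
    then show ?thesis
      by (meson r_into_rtrancl rtrancl_into_rtrancl)
  qed (auto simp: delete_vertex_def split: if_splits)
  then show ?case
    using step.IH by (rule rtrancl_trans)
qed simp

lemma reachable_imp_reachable_delete_vertex:
  assumes "t x \<noteq> Some x" and "y \<noteq> x" and "(z, y) \<in> (parent_rel t)\<^sup>*"
  shows "(z \<noteq> x \<longrightarrow> (z, y) \<in> (parent_rel (delete_vertex x t))\<^sup>*) \<and>
    (z = x \<longrightarrow> (\<forall>w. t w = Some x \<longrightarrow> (w, y) \<in> (parent_rel (delete_vertex x t))\<^sup>*))"
  using assms(3)
proof (induction rule: converse_rtrancl_induct)
  case (step a b)
  have ab: "t a = Some b"
    using step.hyps(1) by simp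
  show ?case
  proof (intro conjI impI allI)
    assume "a \<noteq> x"
    show "(a, y) \<in> (parent_rel (delete_vertex x t))\<^sup>*"
    proof (cases "b = x")
      case False
      then have "delete_vertex x t a = Some b"
        using ab \<open>a \<noteq> x\<close> by (simp add: delete_vertex_def)
      then show ?thesis
        using step.IH False by (simp add: converse_rtrancl_into_rtrancl)
    qed (use step.IH ab in simp)
  next
    fix w
    assume "a = x" and wx: "t w = Some x"
    then have "b \<noteq> x" "w \<noteq> x"
      using ab assms(1) by auto
    then have "delete_vertex x t w = Some b"
      using wx ab \<open>a = x\<close> by (simp add: delete_vertex_def)
    then show "(w, y) \<in> (parent_rel (delete_vertex x t))\<^sup>*"
      using step.IH \<open>b \<noteq> x\<close> by (simp add: converse_rtrancl_into_rtrancl)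
  qed
qed (use \<open>y \<noteq> x\<close> in simp)

lemma subtree_delete_vertex:
  assumes acyc: "acyclic (parent_rel t)" and "y \<noteq> x"
  shows "subtree (delete_vertex x t) y = subtree t y - {x}"
proof -
  have no_loop: "t x \<noteq> Some x"
    using parent_not_in_subtree[OF acyc, of x x] by auto
  show ?thesis
  proof (intro set_eqI iffI)
    fix z
    assume "z \<in> subtree (delete_vertex x t) y"
    then have path: "(z, y) \<in> (parent_rel (delete_vertex x t))\<^sup>*"
      by (simp add: subtree_iff)
    then have "z \<noteq> x"
      using \<open>y \<noteq> x\<close> by (cases rule: converse_rtranclE) (auto simp: delete_vertex_def)
    then show "z \<in> subtree t y - {x}"
      using reachable_delete_vertex_imp_reachable[OF path] by (simp add: subtree_iff)
  next
    fix z
    assume "z \<in> subtree t y - {x}"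
    then show "z \<in> subtree (delete_vertex x t) y"
      using reachable_imp_reachable_delete_vertex[where t = t and x = x, OF no_loop \<open>y \<noteq> x\<close>, of z]
      by (simp add: subtree_iff)
  qed
qed

section \<open>Adding a vertex adjacent to universal vertices\<close>

locale universal_extension =
  fixes V :: "'a set" and E :: "'a \<Rightarrow> 'a \<Rightarrow> bool" and K :: "'a set" and x :: 'a
  assumes simple: "simple_graph V E" and K_nonempty: "K \<noteq> {}" and K_subset: "K \<subseteq> V"
    and K_universal: "\<forall>v\<in>K. universal V E v" and x_notin: "x \<notin> V"
begin

abbreviation H :: "'a \<Rightarrow> 'a \<Rightarrow> bool" where
  "H \<equiv> add_vertex_edges E x K"

lemma finite_V: "finite V"
  using simple by (simp add: simple_graph_def)

lemma E_edge: "E a b \<Longrightarrow> a \<in> V \<and> b \<in> V \<and> a \<noteq> b"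
  using simple by (simp add: simple_graph_def)

lemma symp_E: "symp E"
  using simple by (auto simp: simple_graph_def symp_def)

lemma symp_H: "symp H"
  using symp_E by (auto simp: symp_def add_vertex_edges_def)

lemma H_eq_E: "a \<in> V \<Longrightarrow> b \<in> V \<Longrightarrow> H a b = E a b"
  using x_notin by (auto simp: add_vertex_edges_def)

lemma H_x_iff: "H x a \<longleftrightarrow> a \<in> K" "H a x \<longleftrightarrow> a \<in> K"
  using x_notin E_edge K_subset by (auto simp: add_vertex_edges_def)

lemma E_imp_H: "E a b \<Longrightarrow> H a b"
  by (simp add: add_vertex_edges_def)

lemma H_edge: "H a b \<Longrightarrow> a \<in> insert x V \<and> b \<in> insert x V"
  using E_edge[of a b] K_subset by (auto simp: add_vertex_edges_def)

lemma K_adjacent: "k \<in> K \<Longrightarrow> w \<in> V \<Longrightarrow> w \<noteq> k \<Longrightarrow> E k w \<and> E w k"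
  using K_universal symp_E by (auto simp: universal_def symp_def)

lemma nonseparating_x: "nonseparating H x"
  unfolding nonseparating_def
proof (intro allI impI)
  fix S
  assume "x \<in> S" and conn: "connected_on H S" and "S \<noteq> {x}"
  obtain k where k: "k \<in> S" "k \<noteq> x" "H x k"
    using connected_on_ex_neighbour[OF conn \<open>x \<in> S\<close> \<open>S \<noteq> {x}\<close>] by blast
  then have "k \<in> K"
    using H_x_iff by simp
  have "S - {x} \<subseteq> V"
  proof
    fix w
    assume w: "w \<in> S - {x}"
    then obtain c where "H w c"
      using connected_on_ex_neighbour[OF conn, of w] \<open>x \<in> S\<close> by blast
    then show "w \<in> V"
      using H_edge w by auto
  qed
  then show "connected_on H (S - {x})"
    using k \<open>k \<in> K\<close> K_adjacent E_imp_H by (intro connected_on_if_dominating[OF symp_H, of k]) auto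
qed

lemma H_neighbour_iff_E_neighbour:
  assumes "u \<in> V" and "w \<in> A" "w \<in> V" "w \<noteq> u" and "A \<subseteq> insert x V"
  shows "(\<exists>z\<in>A. H u z) \<longleftrightarrow> (\<exists>z\<in>A - {x}. E u z)"
proof
  assume "\<exists>z\<in>A. H u z"
  then obtain z where z: "z \<in> A" "H u z"
    by blast
  show "\<exists>z\<in>A - {x}. E u z"
  proof (cases "z = x")
    case True
    then have "E u w"
      using z(2) H_x_iff(2) K_adjacent assms by auto
    then show ?thesis
      using assms x_notin by auto
  next
    case False
    then show ?thesis
      using z assms H_eq_E by auto
  qed
qed (use E_imp_H in blast)

context
  fixes t
  assumes st: "search_tree H (insert x V) t"
begin

lemma acyclic_tree: "acyclic (parent_rel t)"
  using acyclic_parent_rel[OF st symp_H] .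

lemma subtree_below_x_meets_K:
  assumes y: "t y = Some x"
  shows "\<exists>k\<in>K. k \<in> subtree t y"
proof -
  have "(y, x) \<in> (induced_edges H (subtree t x))\<^sup>*"
    using connected_on_subtree[OF st symp_H, of x] subtree_child[of t y x, OF y]
    by (simp add: connected_on_def)
  moreover have "x \<notin> subtree t y"
    using parent_not_in_subtree[OF acyclic_tree y] .
  ultimately obtain p q where pq: "p \<in> subtree t y" "q \<notin> subtree t y" "q \<in> subtree t x" "H p q"
    using reachable_leaves_set[of y x H "subtree t x" "subtree t y"] by auto
  show ?thesis
  proof (cases "q = x")
    case True
    then show ?thesis
      using pq(1,4) H_x_iff(2) by auto
  next
    case False
    then obtain c where c: "t c = Some x" "q \<in> subtree t c"
      using pq(3) by (auto elim: subtree_below_child)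
    then have "c \<noteq> y"
      using pq(2) by auto
    then show ?thesis
      using sibling_subtrees_separated[OF st symp_H y c(1) _ pq(1) c(2)] pq(4) by auto
  qed
qed

lemma sibling_eq_if_K_in_subtree:
  assumes "k \<in> K" "k \<in> subtree t w" and w: "t w = Some p" "t w' = Some p" and "w' \<noteq> x"
  shows "w' = w"
proof (rule ccontr)
  assume "w' \<noteq> w"
  then have "k \<noteq> w' \<and> \<not> H k w'"
    using sibling_subtrees_separated[OF st symp_H w _ assms(2) subtree_self] by auto
  moreover have "w' \<in> V"
    using search_tree_child_in[OF st w(2)] \<open>w' \<noteq> x\<close> by simp
  ultimately show False
    using K_adjacent[OF \<open>k \<in> K\<close>] E_imp_H by blast
qed

lemma x_child_unique:
  assumes "t y = Some x" and "t y' = Some x"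
  shows "y' = y"
proof -
  obtain k where "k \<in> K" "k \<in> subtree t y"
    using subtree_below_x_meets_K[OF assms(1)] by blast
  moreover have "y' \<noteq> x"
    using parent_not_in_subtree[OF acyclic_tree assms(2)] by auto
  ultimately show ?thesis
    using sibling_eq_if_K_in_subtree assms by blast
qed

lemma sibling_eq_if_x_in_subtree:
  assumes "t y = Some x" and "x \<in> subtree t w" and w: "t w = Some p" "t w' = Some p"
  shows "w' = w"
proof -
  obtain k where k: "k \<in> K" "k \<in> subtree t y"
    using subtree_below_x_meets_K[OF assms(1)] by blast
  then have "k \<in> subtree t w"
    using subtree_trans[OF subtree_trans[OF k(2) subtree_child[of t y x, OF assms(1)]] assms(2)] by blast
  moreover have "w' \<noteq> x \<or> w' = w"
    using sibling_subtrees_separated[OF st symp_H w _ assms(2) subtree_self] by auto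
  ultimately show ?thesis
    using sibling_eq_if_K_in_subtree[OF k(1) _ w] by blast
qed

lemma K_below_x_avoiding_ancestor:
  assumes "t y = Some x" and "y \<in> subtree t u" and "u \<noteq> y"
  obtains k where "k \<in> K" "k \<in> subtree t y" "k \<noteq> u"
proof -
  obtain k where "k \<in> K" "k \<in> subtree t y"
    using subtree_below_x_meets_K[OF assms(1)] by blast
  moreover have "u \<notin> subtree t y"
    using subtree_antisym[OF acyclic_tree _ assms(2)] assms(3) by auto
  ultimately show thesis
    using that by blast
qed

lemma neighbour_in_subtree_delete_x_iff:
  assumes vu: "t v = Some u" and "x \<noteq> u" and w: "t w = Some v" "w \<noteq> x"
  shows "(\<exists>z\<in>subtree t w. H u z) \<longleftrightarrow> (\<exists>z\<in>subtree (delete_vertex x t) w. E u z)"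
proof -
  have "u \<in> V" "w \<in> V"
    using search_tree_parent_in[OF st vu] search_tree_child_in[OF st w(1)] assms(2) w(2) by auto
  moreover have "w \<noteq> u"
    using parent_not_in_subtree[OF acyclic_tree vu] subtree_child[of t u v] w(1) by auto
  ultimately show ?thesis
    using H_neighbour_iff_E_neighbour[OF \<open>u \<in> V\<close> subtree_self] subtree_subset[OF st]
      search_tree_child_in[OF st w(1)] subtree_delete_vertex[OF acyclic_tree w(2)] by auto
qed

lemma neighbour_in_subtree_below_x:
  assumes vu: "t v = Some u" and "x \<noteq> u" and y: "t y = Some x" and x: "t x = Some v"
  shows "(\<exists>z\<in>subtree t x. H u z) \<and> (\<exists>z\<in>subtree (delete_vertex x t) y. E u z)"
proof -
  have "u \<in> V"
    using search_tree_parent_in[OF st vu] assms(2) by simp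
  have v_sub: "v \<in> subtree t u"
    using subtree_child[of t v u, OF vu] .
  have "y \<in> subtree t u"
    using subtree_trans[OF subtree_child[of t y x, OF y] subtree_trans[OF subtree_child[of t x v, OF x] v_sub]] .
  moreover have "y \<noteq> u"
    using y subtree_trans[OF v_sub subtree_child[of t u x]] parent_not_in_subtree[OF acyclic_tree x]
    by auto
  ultimately obtain k where k: "k \<in> K" "k \<in> subtree t y" "k \<noteq> u"
    using K_below_x_avoiding_ancestor[OF y] by blast
  then have "E u k" "k \<noteq> x"
    using K_adjacent[OF k(1) \<open>u \<in> V\<close>] K_subset x_notin by auto
  moreover have "k \<in> subtree t x"
    using subtree_trans[OF k(2) subtree_child[of t y x, OF y]] .
  moreover have "y \<noteq> x"
    using y parent_not_in_subtree[OF acyclic_tree y] by auto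
  ultimately show ?thesis
    using k(2) subtree_delete_vertex[OF acyclic_tree, of y x] E_imp_H by auto
qed

lemma delete_x_rotate:
  assumes vu: "t v = Some u" and "x \<noteq> u" "x \<noteq> v"
  shows "delete_vertex x (rotate H t u v) = rotate E (delete_vertex x t) u v"
proof
  fix y
  have "u \<noteq> v"
    using parent_not_in_subtree[OF acyclic_tree vu] by auto
  show "delete_vertex x (rotate H t u v) y = rotate E (delete_vertex x t) u v y"
  proof (cases "y = x \<or> y = u \<or> y = v")
    case True
    have "t x \<noteq> Some v" if "t u = Some x"
      using parent_not_in_subtree[OF acyclic_tree, of x v]
        subtree_trans[OF subtree_child[of t v u, OF vu] subtree_child[of t u x, OF that]] by auto
    then show ?thesis
      using True \<open>x \<noteq> u\<close> \<open>x \<noteq> v\<close> \<open>u \<noteq> v\<close> by (auto simp: delete_vertex_def rotate_def)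
  next
    case False
    show ?thesis
    proof (cases "t y = Some x")
      case True
      then show ?thesis
        using False neighbour_in_subtree_below_x[OF vu \<open>x \<noteq> u\<close> True] \<open>x \<noteq> u\<close> \<open>x \<noteq> v\<close>
        by (auto simp: delete_vertex_def rotate_def)
    next
      case not_child: False
      then show ?thesis
        using False neighbour_in_subtree_delete_x_iff[OF vu \<open>x \<noteq> u\<close>, of y] \<open>x \<noteq> u\<close> \<open>x \<noteq> v\<close>
        by (auto simp: delete_vertex_def rotate_def)
    qed
  qed
qed

lemma delete_x_rotate_down:
  assumes vx: "t v = Some x"
  shows "delete_vertex x (rotate H t x v) = delete_vertex x t"
proof
  fix y
  have "x \<noteq> v" "t x \<noteq> Some x"
    using parent_not_in_subtree[OF acyclic_tree vx] parent_not_in_subtree[OF acyclic_tree, of x x] by auto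
  moreover have "t y \<noteq> Some x" if "y \<noteq> v"
    using x_child_unique[OF vx, of y] that by auto
  ultimately show "delete_vertex x (rotate H t x v) y = delete_vertex x t y"
    using vx by (cases "y = x \<or> y = v") (auto simp: delete_vertex_def rotate_def)
qed

lemma delete_x_rotate_up:
  assumes xu: "t x = Some u"
  shows "delete_vertex x (rotate H t u x) = delete_vertex x t"
proof
  fix y
  have x_sub: "x \<in> subtree t u"
    using subtree_child[of t x u, OF xu] .
  have "u \<noteq> x" "u \<in> V"
    using parent_not_in_subtree[OF acyclic_tree xu] search_tree_parent_in[OF st xu] by auto
  have "t u \<noteq> Some x"
    using parent_not_in_subtree[OF acyclic_tree, of u x] x_sub by auto
  have moves: "\<exists>z\<in>subtree t y. H u z" if y: "t y = Some x"
  proof -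
    have "y \<in> subtree t u"
      using subtree_trans[OF subtree_child[of t y x, OF y] x_sub] .
    moreover have "u \<noteq> y"
      using y \<open>t u \<noteq> Some x\<close> by auto
    ultimately obtain k where "k \<in> K" "k \<in> subtree t y" "k \<noteq> u"
      using K_below_x_avoiding_ancestor[OF y] by blast
    then show ?thesis
      using K_adjacent \<open>u \<in> V\<close> E_imp_H by blast
  qed
  show "delete_vertex x (rotate H t u x) y = delete_vertex x t y"
    using moves xu \<open>u \<noteq> x\<close> \<open>t u \<noteq> Some x\<close> by (auto simp: delete_vertex_def rotate_def)
qed

lemma ancestors_x_rotate_other:
  assumes vu: "t v = Some u" and "x \<noteq> u" "x \<noteq> v" and y: "t y = Some x"
  shows "ancestors (rotate H t u v) x = ancestors t x"
proof (cases "x \<in> subtree t u")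
  case False
  then show ?thesis
    using ancestors_rotate_outside[of t v u, OF vu] by simp
next
  case True
  have "u \<in> V"
    using search_tree_parent_in[OF st vu] \<open>x \<noteq> u\<close> by simp
  obtain w where w: "t w = Some u" "x \<in> subtree t w"
    using True \<open>x \<noteq> u\<close> by (auto elim: subtree_below_child)
  then have "w = v"
    using sibling_eq_if_x_in_subtree[OF y w(2) w(1) vu] by simp
  then obtain w' where w': "t w' = Some v" "x \<in> subtree t w'"
    using w(2) \<open>x \<noteq> v\<close> by (auto elim: subtree_below_child)
  have w'_sub: "w' \<in> subtree t u"
    using subtree_trans[OF subtree_child[of t w' v, OF w'(1)] subtree_child[of t v u, OF vu]] .
  have "u \<noteq> w'"
    using parent_not_in_subtree[OF acyclic_tree vu] subtree_child[of t u v] w'(1) by auto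
  then have "u \<notin> subtree t w'"
    using subtree_antisym[OF acyclic_tree _ w'_sub] by auto
  obtain k where k: "k \<in> K" "k \<in> subtree t y"
    using subtree_below_x_meets_K[OF y] by blast
  then have "k \<in> subtree t w'"
    using subtree_trans[OF subtree_trans[OF k(2) subtree_child[of t y x, OF y]] w'(2)] by blast
  then have "\<exists>z\<in>subtree t w'. H u z"
    using K_adjacent[OF k(1) \<open>u \<in> V\<close>] \<open>u \<notin> subtree t w'\<close> E_imp_H by blast
  then show ?thesis
    using ancestors_rotate_moved[OF acyclic_tree vu w'(1) _ w'(2)] by simp
qed

lemma search_tree_delete_x: "search_tree E V (delete_vertex x t)"
proof -
  have "V \<noteq> {}"
    using K_nonempty K_subset by auto
  then have "search_tree H V (delete_vertex x t)"
    using search_tree_delete_vertex[OF symp_H nonseparating_x st] x_notin by auto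
  then show ?thesis
    using search_tree_cong H_eq_E by blast
qed

end

definition x_label :: "('a \<Rightarrow> 'a option) \<Rightarrow> nat" where
  "x_label t = (if \<exists>y. t y = Some x then Suc (card (ancestors t x) mod 2) else 0)"

lemma x_label_le: "x_label t \<le> 2"
  unfolding x_label_def by simp presburger

lemma x_label_rotate_x_down:
  assumes st: "search_tree H (insert x V) t" and vx: "t v = Some x"
  shows "x_label (rotate H t x v) \<noteq> x_label t"
proof -
  have "card (ancestors (rotate H t x v) x) = Suc (card (ancestors t x))"
    using ancestors_rotate_down[OF acyclic_tree[OF st] vx] finite_ancestors[OF st] finite_V by simp
  then have "x_label (rotate H t x v) =
      (if \<exists>y. rotate H t x v y = Some x then Suc (Suc (card (ancestors t x)) mod 2) else 0)"
    by (simp add: x_label_def)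
  moreover have "x_label t = Suc (card (ancestors t x) mod 2)"
    using vx by (auto simp: x_label_def)
  ultimately show ?thesis
    using label_parity_neq by metis
qed

lemma x_label_rotate_x_up:
  assumes st: "search_tree H (insert x V) t" and xu: "t x = Some u"
  shows "x_label (rotate H t u x) \<noteq> x_label t"
proof -
  note up = ancestors_rotate_up[OF acyclic_tree[OF st] xu, where E = H]
  have "finite (ancestors (rotate H t u x) x)"
    using finite_ancestors[OF st finite_insert[THEN iffD2, OF finite_V], of x] up(1) by simp
  then have "card (ancestors t x) = Suc (card (ancestors (rotate H t u x) x))"
    using up by simp
  then have "x_label t =
      (if \<exists>y. t y = Some x then Suc (Suc (card (ancestors (rotate H t u x) x)) mod 2) else 0)"
    by (simp add: x_label_def)
  moreover have "rotate H t u x u = Some x"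
    by (simp add: rotate_def)
  then have "x_label (rotate H t u x) = Suc (card (ancestors (rotate H t u x) x) mod 2)"
    by (auto simp: x_label_def)
  ultimately show ?thesis
    using label_parity_neq by metis
qed

lemma x_label_rotate_other:
  assumes st: "search_tree H (insert x V) t" and vu: "t v = Some u" and "x \<noteq> u" "x \<noteq> v"
  shows "x_label (rotate H t u v) = x_label t"
proof -
  have "u \<noteq> v"
    using parent_not_in_subtree[OF acyclic_tree[OF st] vu] by auto
  then show ?thesis
    using rotate_has_child_iff[where t = t and E = H, OF assms(3,4) _ vu]
      ancestors_x_rotate_other[OF st vu assms(3,4)]
    by (auto simp: x_label_def)
qed

lemma colour_rotate_neq:
  assumes st: "search_tree H (insert x V) t" and vu: "t v = Some u"
    and st': "search_tree H (insert x V) (rotate H t u v)"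
    and f: "\<And>t. search_tree E V t \<Longrightarrow> f t < m"
      "\<And>t t'. search_tree E V t \<Longrightarrow> search_tree E V t' \<Longrightarrow> rot_adj E t t' \<Longrightarrow> f t \<noteq> f t'"
    and "3 \<le> m"
  shows "(f (delete_vertex x (rotate H t u v)) + x_label (rotate H t u v)) mod m \<noteq>
    (f (delete_vertex x t) + x_label t) mod m"
proof -
  have labels: "x_label (rotate H t u v) < m" "x_label t < m"
    using x_label_le[of t] x_label_le[of "rotate H t u v"] \<open>3 \<le> m\<close> by linarith+
  consider "x = u" | "x = v" | "x \<noteq> u" "x \<noteq> v"
    by blast
  then show ?thesis
  proof cases
    case 1
    then have "delete_vertex x (rotate H t u v) = delete_vertex x t"
      and "x_label (rotate H t u v) \<noteq> x_label t"
      using delete_x_rotate_down[OF st] x_label_rotate_x_down[OF st] vu by simp_all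
    then show ?thesis
      using mod_add_right_neq[OF labels, of "f (delete_vertex x t)"] by (simp add: add.commute)
  next
    case 2
    then have "delete_vertex x (rotate H t u v) = delete_vertex x t"
      and "x_label (rotate H t u v) \<noteq> x_label t"
      using delete_x_rotate_up[OF st] x_label_rotate_x_up[OF st] vu by simp_all
    then show ?thesis
      using mod_add_right_neq[OF labels, of "f (delete_vertex x t)"] by (simp add: add.commute)
  next
    case 3
    have "delete_vertex x t v = Some u"
      using vu 3 by (simp add: delete_vertex_def)
    then have "rot_adj E (delete_vertex x t) (delete_vertex x (rotate H t u v))"
      using delete_x_rotate[OF st vu 3] by (intro rot_adjI) auto
    then have "f (delete_vertex x (rotate H t u v)) \<noteq> f (delete_vertex x t)"
      using f(2)[OF search_tree_delete_x[OF st] search_tree_delete_x[OF st']] by (metis not_sym)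
    then show ?thesis
      using mod_add_right_neq f(1)[OF search_tree_delete_x[OF st]] f(1)[OF search_tree_delete_x[OF st']]
        x_label_rotate_other[OF st vu 3] by simp
  qed
qed

lemma rotate_E_eq_rotate_H:
  assumes st: "search_tree E V t" and vu: "t v = Some u"
  shows "rotate E t u v = rotate H t u v"
proof
  fix y
  have "u \<in> V"
    using search_tree_parent_in[OF st vu] .
  moreover have "subtree t y \<subseteq> V" if "t y = Some v"
    using subtree_subset[OF st search_tree_child_in[OF st that]] .
  ultimately have "(\<exists>z\<in>subtree t y. E u z) \<longleftrightarrow> (\<exists>z\<in>subtree t y. H u z)" if "t y = Some v"
    using H_eq_E that by blast
  then show "rotate E t u v y = rotate H t u v y"
    unfolding rotate_def by (cases "t y = Some v") simp_all
qed

lemma rot_adj_E_imp_H: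
  assumes "search_tree E V t1" and "search_tree E V t2" and "rot_adj E t1 t2"
  shows "rot_adj H t1 t2"
  using assms rotate_E_eq_rotate_H unfolding rot_adj_def by metis

lemma chi_le_chi_extension:
  assumes "connected_on E V"
  shows "chi_rotation_graph V E \<le> chi_rotation_graph (insert x V) H"
proof -
  obtain k where "k \<in> K"
    using K_nonempty by blast
  then have "connected_on H (insert x V)"
    using K_subset K_adjacent E_imp_H H_x_iff by (intro connected_on_if_dominating[OF symp_H, of k]) auto
  moreover have agree: "\<forall>a\<in>V. \<forall>b\<in>V. E a b = H a b"
    using H_eq_E by simp
  moreover have "connected_on H V"
    using connected_on_cong[OF agree] assms by simp
  ultimately have lift: "search_tree H (insert x V) (add_root x V t)" if "search_tree E V t" for t
    using search_tree_add_root[OF symp_H x_notin] search_tree_cong[OF that agree] by blast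
  have adj: "rot_adj H (add_root x V t1) (add_root x V t2)"
    if "search_tree E V t1" "search_tree E V t2" "rot_adj E t1 t2" for t1 t2
    using rot_adj_add_root[OF search_tree_cong[OF that(1) agree] search_tree_cong[OF that(2) agree]
        symp_H x_notin rot_adj_E_imp_H[OF that]] .
  have "colorable {t. search_tree E V t} (rot_adj E) (chi_rotation_graph (insert x V) H)"
    using colorable_chi_rotation_graph[OF finite_insert[THEN iffD2, OF finite_V] symp_H]
    by (rule colorable_hom) (use lift adj in auto)
  then show ?thesis
    unfolding chi_rotation_graph_def[of V] by (rule chromatic_number_le)
qed

lemma chi_extension_le:
  assumes "rotation_pentagon E V"
  shows "chi_rotation_graph (insert x V) H \<le> chi_rotation_graph V E"
proof -
  let ?m = "chi_rotation_graph V E"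
  have col: "colorable {t. search_tree E V t} (rot_adj E) ?m"
    using colorable_chi_rotation_graph[OF finite_V symp_E] .
  then obtain f where f: "\<And>t. search_tree E V t \<Longrightarrow> f t < ?m"
    "\<And>t t'. search_tree E V t \<Longrightarrow> search_tree E V t' \<Longrightarrow> rot_adj E t t' \<Longrightarrow> f t \<noteq> f t'"
    unfolding colorable_def by auto
  have "3 \<le> ?m"
    using three_le_if_rotation_pentagon[OF col assms] .
  let ?g = "\<lambda>t. (f (delete_vertex x t) + x_label t) mod ?m"
  have neq: "?g (rotate H t u v) \<noteq> ?g t"
    if "search_tree H (insert x V) t" "t v = Some u" "search_tree H (insert x V) (rotate H t u v)"
    for t u v
    using colour_rotate_neq[OF that f \<open>3 \<le> ?m\<close>] .
  have "?g t1 \<noteq> ?g t2"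
    if "search_tree H (insert x V) t1" "search_tree H (insert x V) t2" "rot_adj H t1 t2" for t1 t2
    using that neq unfolding rot_adj_def by metis
  moreover have "?g t < ?m" for t
    using \<open>3 \<le> ?m\<close> by simp
  ultimately have "colorable {t. search_tree H (insert x V) t} (rot_adj H) ?m"
    unfolding colorable_def by (intro exI[of _ ?g]) auto
  then show ?thesis
    unfolding chi_rotation_graph_def[of "insert x V"] by (rule chromatic_number_le)
qed

end

theorem proposition3p2:
  fixes V :: "'a set" and E :: "'a \<Rightarrow> 'a \<Rightarrow> bool" and K :: "'a set" and x :: 'a
  assumes "simple_graph V E"
    and "connected_on E V"
    and "\<not> complete_graph V E"
    and "K \<noteq> {}" and "K \<subseteq> V" and "\<forall>v\<in>K. universal V E v"
    and "x \<notin> V"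
  shows "chi_rotation_graph (insert x V) (add_vertex_edges E x K) = chi_rotation_graph V E"
proof -
  interpret universal_extension V E K x
    using assms by unfold_locales auto
  obtain k where "k \<in> K"
    using assms(4) by blast
  obtain a b where "a \<in> V" "b \<in> V" "a \<noteq> b" "\<not> E a b"
    using assms(3) by (auto simp: complete_graph_def)
  then have "rotation_pentagon E V"
    using rotation_pentagon_if_dominating[OF symp_E finite_V] \<open>k \<in> K\<close> K_subset K_adjacent by blast
  then show ?thesis
    using chi_extension_le chi_le_chi_extension[OF assms(2)] by (simp add: antisym)
qed

end
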